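(* Given a (finite) P/T net with silent moves $N=(S,A,T)$ and a place relation $R\subseteq S\times S$, it is decidable whether $R$ is a branching place bisimulation.
   Context: A P/T net with silent moves is $N=(S,A,T)$: $S$ a finite set of places, $A$ a finite set of labels containing the silent label $\tau$, $T\subseteq(\mathcal{M}(S)\setminus\{\theta\})\times A\times\mathcal{M}(S)$ a finite set of transitions ($\mathcal{M}(S)$ the finite multisets over $S$, $\theta$ empty, $\oplus$ union, $\ominus$ truncated difference). For $t=(m,\ell,m')$: ${}^\bullet t=m$, $l(t)=\ell$, $t^\bullet=m'$. $m[t\rangle m'$ iff ${}^\bullet t\subseteq m$ and $m'=(m\ominus{}^\bullet t)\oplus t^\bullet$; firing sequences by concatenation. Idling transitions: $i(s)=(s,\tau,s)$ for $s\in S$ (not in $T$, usable in silent sequences, firing by the same rule). A transition is $\tau$-sequential if $l(t)=\tau$ and $|{}^\bullet t|=|t^\bullet|=1$. Pre/post-sets of sequences: ${}^\bullet\epsilon=\theta$, ${}^\bullet(t\sigma)={}^\bullet t\oplus({}^\bullet\sigma\ominus t^\bullet)$, $\epsilon^\bullet=\theta$, $(t\sigma)^\bullet=\sigma^\bullet\oplus(t^\bullet\ominus{}^\bullet\sigma)$. A sequence $\sigma=t_1\dots t_n$ ($n\ge1$, $t_i$ in $T$ or idling) is $\tau$-1-sequential if each $t_i$ has label $\tau$ and singleton pre- and post-set and $t_i^\bullet={}^\bullet t_{i+1}$; $\sigma=\sigma_1\cdots\sigma_k$ is $\tau$-$k$-sequential if each $\sigma_i$ is $\tau$-1-sequential,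 ${}^\bullet\sigma=\bigoplus_i{}^\bullet\sigma_i$, $\sigma^\bullet=\bigoplus_i\sigma_i^\bullet$; $\sigma$ is $\tau$-sequential if $\tau$-$k$-sequential for some $k\ge1$. For $\tau$-sequential $\sigma=t_1\dots t_n$ with ${}^\bullet\sigma=m_0[t_1\rangle m_1\cdots[t_n\rangle m_n=\sigma^\bullet$ and a marking relation $Q$: $\Psi(m,\sigma,Q)$ iff $(m,m_i)\in Q$ for $i=0,\dots,n-1$; $\Phi(\sigma,m,Q)$ iff $(m_i,m)\in Q$ for $i=0,\dots,n-1$. Additive closure of $R\subseteq S\times S$: the least $R^\oplus$ with $(\theta,\theta)\in R^\oplus$ and, if $(s_1,s_2)\in R$, $(m_1,m_2)\in R^\oplus$, then $(s_1\oplus m_1,s_2\oplus m_2)\in R^\oplus$. A branching place bisimulation is $R\subseteq S\times S$ such that whenever $(m_1,m_2)\in R^\oplus$: (1) for every $t_1$ with $m_1[t_1\rangle m_1'$: (i) either $t_1$ is $\tau$-sequential and there are $\sigma,m_2'$ with $\sigma$ $\tau$-sequential, $m_2[\sigma\rangle m_2'$, $\Psi({}^\bullet t_1,\sigma,R^\oplus)$, $({}^\bullet t_1,\sigma^\bullet)\in R^\oplus$, $(t_1^\bullet,\sigma^\bullet)\in R^\oplus$, $(m_1\ominus{}^\bullet t_1,m_2\ominus{}^\bullet\sigma)\in R^\oplus$; (ii) or there are $\sigma,t_2,m,m_2'$ with $\sigma$ $\tau$-sequential, $m_2[\sigma\rangle m[t_2\rangle m_2'$, $\sigma^\bullet={}^\bullet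 t_2$, $l(t_1)=l(t_2)$, $\Psi({}^\bullet t_1,\sigma,R^\oplus)$, $({}^\bullet t_1,\sigma^\bullet)\in R^\oplus$, $(t_1^\bullet,t_2^\bullet)\in R^\oplus$, $(m_1\ominus{}^\bullet t_1,m_2\ominus{}^\bullet\sigma)\in R^\oplus$; (2) symmetrically for every $t_2$ with $m_2[t_2\rangle m_2'$: (i) either $t_2$ is $\tau$-sequential and there are $\sigma,m_1'$ with $\sigma$ $\tau$-sequential, $m_1[\sigma\rangle m_1'$, $\Phi(\sigma,{}^\bullet t_2,R^\oplus)$, $(\sigma^\bullet,{}^\bullet t_2)\in R^\oplus$, $(\sigma^\bullet,t_2^\bullet)\in R^\oplus$, $(m_1\ominus{}^\bullet\sigma,m_2\ominus{}^\bullet t_2)\in R^\oplus$; (ii) or there are $\sigma,t_1,m,m_1'$ with $\sigma$ $\tau$-sequential, $m_1[\sigma\rangle m[t_1\rangle m_1'$, $\sigma^\bullet={}^\bullet t_1$, $l(t_1)=l(t_2)$, $\Phi(\sigma,{}^\bullet t_2,R^\oplus)$, $(\sigma^\bullet,{}^\bullet t_2)\in R^\oplus$, $(t_1^\bullet,t_2^\bullet)\in R^\oplus$, $(m_1\ominus{}^\bullet\sigma,m_2\ominus{}^\bullet t_2)\in R^\oplus$. *)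

theory Defs
  imports Main "HOL-Library.Multiset" "HOL-Library.Nat_Bijection"
begin

type_synonym ('p,'l) trans = "'p multiset \<times> 'l \<times> 'p multiset"

definition pre :: "('p,'l) trans \<Rightarrow> 'p multiset" where "pre t = fst t"
definition lab :: "('p,'l) trans \<Rightarrow> 'l" where "lab t = fst (snd t)"
definition post :: "('p,'l) trans \<Rightarrow> 'p multiset" where "post t = snd (snd t)"

definition pt_net :: "'l \<Rightarrow> 'p set \<Rightarrow> 'l set \<Rightarrow> ('p,'l) trans set \<Rightarrow> bool" where
  "pt_net tau S A T \<longleftrightarrow> finite S \<and> finite A \<and> tau \<in> A \<and> finite T \<and>
     (\<forall>t\<in>T. pre t \<noteq> {#} \<and> set_mset (pre t) \<subseteq> S \<and> lab t \<in> A \<and> set_mset (post t) \<subseteq> S)"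

definition firing :: "'p multiset \<Rightarrow> ('p,'l) trans \<Rightarrow> 'p multiset \<Rightarrow> bool" where
  "firing m t m' \<longleftrightarrow> pre t \<subseteq># m \<and> m' = (m - pre t) + post t"

fun fire_seq :: "'p multiset \<Rightarrow> ('p,'l) trans list \<Rightarrow> 'p multiset \<Rightarrow> bool" where
  "fire_seq m [] m' \<longleftrightarrow> m' = m"
| "fire_seq m (t # \<sigma>) m'' \<longleftrightarrow> (\<exists>m'. firing m t m' \<and> fire_seq m' \<sigma> m'')"

definition idle :: "'l \<Rightarrow> 'p \<Rightarrow> ('p,'l) trans" where
  "idle tau s = ({#s#}, tau, {#s#})"

fun preseq :: "('p,'l) trans list \<Rightarrow> 'p multiset" where
  "preseq [] = {#}"
| "preseq (t # \<sigma>) = pre t + (preseq \<sigma> - post t)"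

fun postseq :: "('p,'l) trans list \<Rightarrow> 'p multiset" where
  "postseq [] = {#}"
| "postseq (t # \<sigma>) = postseq \<sigma> + (post t - preseq \<sigma>)"

definition tau_seq_trans :: "'l \<Rightarrow> ('p,'l) trans \<Rightarrow> bool" where
  "tau_seq_trans tau t \<longleftrightarrow> lab t = tau \<and> size (pre t) = 1 \<and> size (post t) = 1"

definition tau_1_seq :: "'l \<Rightarrow> 'p set \<Rightarrow> ('p,'l) trans set \<Rightarrow> ('p,'l) trans list \<Rightarrow> bool" where
  "tau_1_seq tau S T \<sigma> \<longleftrightarrow> \<sigma> \<noteq> [] \<and>
     (\<forall>t\<in>set \<sigma>. (t \<in> T \<or> (\<exists>s\<in>S. t = idle tau s)) \<and> tau_seq_trans tau t) \<and>
     (\<forall>i. Suc i < length \<sigma> \<longrightarrow> post (\<sigma> ! i) = pre (\<sigma> ! Suc i))"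

definition tau_k_seq :: "'l \<Rightarrow> 'p set \<Rightarrow> ('p,'l) trans set \<Rightarrow> nat \<Rightarrow> ('p,'l) trans list \<Rightarrow> bool" where
  "tau_k_seq tau S T k \<sigma> \<longleftrightarrow> (\<exists>\<sigma>s. length \<sigma>s = k \<and> \<sigma> = concat \<sigma>s \<and>
     (\<forall>\<rho>\<in>set \<sigma>s. tau_1_seq tau S T \<rho>) \<and>
     preseq \<sigma> = sum_list (map preseq \<sigma>s) \<and> postseq \<sigma> = sum_list (map postseq \<sigma>s))"

definition tau_seq :: "'l \<Rightarrow> 'p set \<Rightarrow> ('p,'l) trans set \<Rightarrow> ('p,'l) trans list \<Rightarrow> bool" where
  "tau_seq tau S T \<sigma> \<longleftrightarrow> (\<exists>k\<ge>1. tau_k_seq tau S T k \<sigma>)"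

fun befores :: "'p multiset \<Rightarrow> ('p,'l) trans list \<Rightarrow> 'p multiset list" where
  "befores m [] = []"
| "befores m (t # \<sigma>) = m # befores ((m - pre t) + post t) \<sigma>"

definition Psi :: "'p multiset \<Rightarrow> ('p,'l) trans list \<Rightarrow> ('p multiset \<times> 'p multiset) set \<Rightarrow> bool" where
  "Psi m \<sigma> Q \<longleftrightarrow> (\<forall>mi\<in>set (befores (preseq \<sigma>) \<sigma>). (m, mi) \<in> Q)"

definition Phi :: "('p,'l) trans list \<Rightarrow> 'p multiset \<Rightarrow> ('p multiset \<times> 'p multiset) set \<Rightarrow> bool" where
  "Phi \<sigma> m Q \<longleftrightarrow> (\<forall>mi\<in>set (befores (preseq \<sigma>) \<sigma>). (mi, m) \<in> Q)"

inductive_set addcl :: "('p \<times> 'p) set \<Rightarrow> ('p multiset \<times> 'p multiset) set" for R where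
  empty: "({#}, {#}) \<in> addcl R"
| add: "(s1, s2) \<in> R \<Longrightarrow> (m1, m2) \<in> addcl R \<Longrightarrow> (add_mset s1 m1, add_mset s2 m2) \<in> addcl R"

definition branching_place_bisim ::
  "'l \<Rightarrow> 'p set \<Rightarrow> 'l set \<Rightarrow> ('p,'l) trans set \<Rightarrow> ('p \<times> 'p) set \<Rightarrow> bool" where
  "branching_place_bisim tau S A T R \<longleftrightarrow> R \<subseteq> S \<times> S \<and>
    (\<forall>(m1, m2)\<in>addcl R.
      (\<forall>t1\<in>T. \<forall>m1'. firing m1 t1 m1' \<longrightarrow>
        (tau_seq_trans tau t1 \<and>
          (\<exists>\<sigma> m2'. tau_seq tau S T \<sigma> \<and> fire_seq m2 \<sigma> m2' \<and> Psi (pre t1) \<sigma> (addcl R) \<and>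
             (pre t1, postseq \<sigma>) \<in> addcl R \<and> (post t1, postseq \<sigma>) \<in> addcl R \<and>
             (m1 - pre t1, m2 - preseq \<sigma>) \<in> addcl R))
        \<or> (\<exists>\<sigma> t2 m m2'. t2 \<in> T \<and> tau_seq tau S T \<sigma> \<and> fire_seq m2 \<sigma> m \<and> firing m t2 m2' \<and>
             postseq \<sigma> = pre t2 \<and> lab t1 = lab t2 \<and> Psi (pre t1) \<sigma> (addcl R) \<and>
             (pre t1, postseq \<sigma>) \<in> addcl R \<and> (post t1, post t2) \<in> addcl R \<and>
             (m1 - pre t1, m2 - preseq \<sigma>) \<in> addcl R)) \<and>
      (\<forall>t2\<in>T. \<forall>m2'. firing m2 t2 m2' \<longrightarrow>
        (tau_seq_trans tau t2 \<and>
          (\<exists>\<sigma> m1'. tau_seq tau S T \<sigma> \<and> fire_seq m1 \<sigma> m1' \<and> Phi \<sigma> (pre t2) (addcl R) \<and>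
             (postseq \<sigma>, pre t2) \<in> addcl R \<and> (postseq \<sigma>, post t2) \<in> addcl R \<and>
             (m1 - preseq \<sigma>, m2 - pre t2) \<in> addcl R))
        \<or> (\<exists>\<sigma> t1 m m1'. t1 \<in> T \<and> tau_seq tau S T \<sigma> \<and> fire_seq m1 \<sigma> m \<and> firing m t1 m1' \<and>
             postseq \<sigma> = pre t1 \<and> lab t1 = lab t2 \<and> Phi \<sigma> (pre t2) (addcl R) \<and>
             (postseq \<sigma>, pre t2) \<in> addcl R \<and> (post t1, post t2) \<in> addcl R \<and>
             (m1 - preseq \<sigma>, m2 - pre t2) \<in> addcl R)))"

datatype recf = Zero | Succ | Proj nat | Comp recf "recf list" | Prec recf recf | Mn recf

definition arg :: "nat \<Rightarrow> nat list \<Rightarrow> nat" where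
  "arg i xs = (if i < length xs then xs ! i else 0)"

inductive eval :: "recf \<Rightarrow> nat list \<Rightarrow> nat \<Rightarrow> bool" where
  zero: "eval Zero xs 0"
| succ: "eval Succ xs (Suc (arg 0 xs))"
| proj: "eval (Proj i) xs (arg i xs)"
| comp: "length ys = length gs \<Longrightarrow> (\<forall>i<length gs. eval (gs ! i) xs (ys ! i)) \<Longrightarrow>
         eval f ys z \<Longrightarrow> eval (Comp f gs) xs z"
| prec0: "eval g xs z \<Longrightarrow> eval (Prec g h) (0 # xs) z"
| precS: "eval (Prec g h) (n # xs) r \<Longrightarrow> eval h (n # r # xs) z \<Longrightarrow> eval (Prec g h) (Suc n # xs) z"
| mn: "eval f (z # xs) 0 \<Longrightarrow> (\<forall>y<z. \<exists>v. eval f (y # xs) (Suc v)) \<Longrightarrow> eval (Mn f) xs z"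

definition enc_trans :: "nat list \<times> nat \<times> nat list \<Rightarrow> nat" where
  "enc_trans t = (case t of (a, l, b) \<Rightarrow> list_encode [list_encode a, l, list_encode b])"

definition enc_input :: "nat list \<Rightarrow> nat list \<Rightarrow> (nat list \<times> nat \<times> nat list) list \<Rightarrow> (nat \<times> nat) list \<Rightarrow> nat" where
  "enc_input ls la lt lr = list_encode [list_encode ls, list_encode la,
      list_encode (map enc_trans lt), list_encode (map prod_encode lr)]"

definition trans_of :: "nat list \<times> nat \<times> nat list \<Rightarrow> (nat, nat) trans" where
  "trans_of t = (case t of (a, l, b) \<Rightarrow> (mset a, l, mset b))"

end

theory Submission
  imports Defs
begin

text \<open>
  The conditions of a branching place bisimulation range over infinitely many pairs of related
  markings and over arbitrarily long \<open>\<tau>\<close>-sequential sequences; two observations make them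
  finitely checkable. First, by additivity of the closure and monotonicity of firing, it suffices
  to answer the moves of each transition \<open>t\<^sub>1\<close> from the markings \<open>(\<bullet>t\<^sub>1, m\<^sub>2)\<close>:
  an answer found there extends to every larger related pair, the rest of the marking acting as a
  frame, and there are only finitely many such \<open>m\<^sub>2\<close>, all of the size of \<open>\<bullet>t\<^sub>1\<close>.
  Second, a \<open>\<tau>\<close>-1-sequential sequence with more than \<open>|S|\<close> transitions visits some
  place twice, and cutting out the cycle in between keeps its pre- and post-set and only removes
  intermediate markings; so only sequences whose components have length at most \<open>|S|\<close>
  need to be searched. This bounded search over lists of naturals is then programmed as a
  \<open>\<mu>\<close>-recursive function.
\<close>

section \<open>Computable functions on natural numbers\<close>

definition computable :: "nat \<Rightarrow> (nat list \<Rightarrow> nat) \<Rightarrow> bool" where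
  "computable n f \<longleftrightarrow> (\<exists>r. \<forall>xs. length xs = n \<longrightarrow> eval r xs (f xs))"

lemma computable_cong: "computable n f \<Longrightarrow> (\<And>xs. length xs = n \<Longrightarrow> f xs = g xs) \<Longrightarrow> computable n g"
  unfolding computable_def by metis

lemma computable_zero: "computable n (\<lambda>xs. 0)"
  unfolding computable_def by (auto intro: eval.zero)

lemma computable_succ: "computable 1 (\<lambda>xs. Suc (xs ! 0))"
  unfolding computable_def
proof (intro exI[of _ Succ] allI impI)
  fix xs :: "nat list" assume "length xs = 1"
  then show "eval Succ xs (Suc (xs ! 0))" using eval.succ[of xs] by (simp add: arg_def)
qed

lemma computable_proj: assumes "i < n" shows "computable n (\<lambda>xs. xs ! i)"
  unfolding computable_def
proof (intro exI[of _ "Proj i"] allI impI)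
  fix xs :: "nat list" assume "length xs = n"
  with assms show "eval (Proj i) xs (xs ! i)" using eval.proj[of i xs] by (simp add: arg_def)
qed

lemma computable_comp:
  assumes f: "computable m f" and gs: "\<forall>g\<in>set gs. computable n g" and m: "length gs = m"
  shows "computable n (\<lambda>xs. f (map (\<lambda>g. g xs) gs))"
proof -
  obtain rf where rf: "\<And>xs. length xs = m \<Longrightarrow> eval rf xs (f xs)" using f unfolding computable_def by blast
  have "\<forall>g\<in>set gs. \<exists>r. \<forall>xs. length xs = n \<longrightarrow> eval r xs (g xs)" using gs unfolding computable_def by blast
  then obtain R where R: "\<And>g xs. g \<in> set gs \<Longrightarrow> length xs = n \<Longrightarrow> eval (R g) xs (g xs)" by metis
  show ?thesis unfolding computable_def
  proof (intro exI[of _ "Comp rf (map R gs)"] allI impI)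
    fix xs :: "nat list" assume "length xs = n"
    then show "eval (Comp rf (map R gs)) xs (f (map (\<lambda>g. g xs) gs))"
      using R rf m by (intro eval.comp[where ys="map (\<lambda>g. g xs) gs"]) auto
  qed
qed

lemma computable_prec:
  assumes g: "computable n g" and h: "computable (Suc (Suc n)) h"
  shows "computable (Suc n) (\<lambda>xs. rec_nat (g (tl xs)) (\<lambda>k r. h (k # r # tl xs)) (hd xs))"
proof -
  obtain rg where rg: "\<And>xs. length xs = n \<Longrightarrow> eval rg xs (g xs)" using g unfolding computable_def by blast
  obtain rh where rh: "\<And>xs. length xs = Suc (Suc n) \<Longrightarrow> eval rh xs (h xs)" using h unfolding computable_def by blast
  have prec: "eval (Prec rg rh) (k # xs) (rec_nat (g xs) (\<lambda>k r. h (k # r # xs)) k)" if "length xs = n" for k xs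
  proof (induction k)
    case 0 then show ?case by (auto intro: eval.prec0 rg that)
  next
    case (Suc k)
    let ?r = "rec_nat (g xs) (\<lambda>k r. h (k # r # xs)) k"
    have "eval rh (k # ?r # xs) (h (k # ?r # xs))" by (rule rh) (simp add: that)
    from eval.precS[OF Suc this] show ?case by simp
  qed
  show ?thesis unfolding computable_def
  proof (intro exI[of _ "Prec rg rh"] allI impI)
    fix xs :: "nat list" assume "length xs = Suc n"
    then show "eval (Prec rg rh) xs (rec_nat (g (tl xs)) (\<lambda>k r. h (k # r # tl xs)) (hd xs))"
      by (cases xs) (simp_all add: prec)
  qed
qed

lemma computable_mn:
  assumes f: "computable (Suc n) f" and ex: "\<And>xs. length xs = n \<Longrightarrow> \<exists>y. f (y # xs) = 0"
  shows "computable n (\<lambda>xs. LEAST y. f (y # xs) = 0)"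
proof -
  obtain rf where rf: "\<And>xs. length xs = Suc n \<Longrightarrow> eval rf xs (f xs)" using f unfolding computable_def by blast
  show ?thesis unfolding computable_def
  proof (intro exI[of _ "Mn rf"] allI impI)
    fix xs :: "nat list" assume l: "length xs = n"
    let ?z = "LEAST y. f (y # xs) = 0"
    have z: "f (?z # xs) = 0" using ex[OF l] by (auto intro: LeastI)
    have below: "\<forall>y<?z. \<exists>v. eval rf (y # xs) (Suc v)"
    proof (intro allI impI)
      fix y assume "y < ?z"
      then have "f (y # xs) \<noteq> 0" by (rule not_less_Least)
      then obtain v where "f (y # xs) = Suc v" using not0_implies_Suc by blast
      then show "\<exists>v. eval rf (y # xs) (Suc v)" using rf[of "y # xs"] l by auto
    qed
    show "eval (Mn rf) xs ?z"
      using rf[of "?z # xs"] z l below by (intro eval.mn) auto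
  qed
qed

lemma computable_const: "computable n (\<lambda>xs. c)"
proof (induction c)
  case 0 then show ?case by (rule computable_zero)
next
  case (Suc c)
  have "computable n (\<lambda>xs. (\<lambda>ys. Suc (ys ! 0)) (map (\<lambda>g. g xs) [\<lambda>xs. c]))"
    by (rule computable_comp[OF computable_succ]) (use Suc in auto)
  then show ?case by simp
qed

definition computable1 :: "(nat \<Rightarrow> nat) \<Rightarrow> bool" where
  "computable1 f \<longleftrightarrow> computable 1 (\<lambda>xs. f (xs ! 0))"
definition computable2 :: "(nat \<Rightarrow> nat \<Rightarrow> nat) \<Rightarrow> bool" where
  "computable2 f \<longleftrightarrow> computable 2 (\<lambda>xs. f (xs ! 0) (xs ! 1))"
definition computable3 :: "(nat \<Rightarrow> nat \<Rightarrow> nat \<Rightarrow> nat) \<Rightarrow> bool" where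
  "computable3 f \<longleftrightarrow> computable 3 (\<lambda>xs. f (xs ! 0) (xs ! 1) (xs ! 2))"

named_theorems computable_intros

lemma computable1_cong: "computable1 f \<Longrightarrow> (\<And>z. f z = g z) \<Longrightarrow> computable1 g"
  by (subgoal_tac "f = g") auto

lemma length_eq_1_iff: "length xs = 1 \<longleftrightarrow> (\<exists>a. xs = [a])"
  by (cases xs) auto

lemma length_eq_2_iff: "length xs = 2 \<longleftrightarrow> (\<exists>a b. xs = [a, b])"
  by (cases xs; cases "tl xs") auto

lemma computable1_compose1: "computable1 f \<Longrightarrow> computable1 g \<Longrightarrow> computable1 (\<lambda>z. f (g z))"
  unfolding computable1_def
  by (drule computable_comp[where gs="[\<lambda>xs. g (xs ! 0)]" and n=1]) auto

lemma computable1_compose2: "computable2 f \<Longrightarrow> computable1 g \<Longrightarrow> computable1 h \<Longrightarrow> computable1 (\<lambda>z. f (g z) (h z))"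
  unfolding computable1_def computable2_def
  by (drule computable_comp[where gs="[\<lambda>xs. g (xs ! 0), \<lambda>xs. h (xs ! 0)]" and n=1]) auto

lemma computable2_compose1: "computable1 f \<Longrightarrow> computable2 g \<Longrightarrow> computable2 (\<lambda>x y. f (g x y))"
  unfolding computable1_def computable2_def
  by (drule computable_comp[where gs="[\<lambda>xs. g (xs ! 0) (xs ! 1)]" and n=2]) auto

lemma computable2_compose2: "computable2 f \<Longrightarrow> computable2 g \<Longrightarrow> computable2 h \<Longrightarrow> computable2 (\<lambda>x y. f (g x y) (h x y))"
  unfolding computable2_def
  by (drule computable_comp[where gs="[\<lambda>xs. g (xs ! 0) (xs ! 1), \<lambda>xs. h (xs ! 0) (xs ! 1)]" and n=2]) auto

lemma computable3_compose1: "computable1 f \<Longrightarrow> computable3 g \<Longrightarrow> computable3 (\<lambda>x y w. f (g x y w))"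
  unfolding computable1_def computable3_def
  by (drule computable_comp[where gs="[\<lambda>xs. g (xs ! 0) (xs ! 1) (xs ! 2)]" and n=3]) auto

lemma computable3_compose2: "computable2 f \<Longrightarrow> computable3 g \<Longrightarrow> computable3 h
     \<Longrightarrow> computable3 (\<lambda>x y w. f (g x y w) (h x y w))"
  unfolding computable2_def computable3_def
  by (drule computable_comp[where gs="[\<lambda>xs. g (xs ! 0) (xs ! 1) (xs ! 2), \<lambda>xs. h (xs ! 0) (xs ! 1) (xs ! 2)]" and n=3]) auto

lemma computable1_const [computable_intros]: "computable1 (\<lambda>z. c)"
  unfolding computable1_def by (rule computable_const)

lemma computable1_id [computable_intros]: "computable1 (\<lambda>z. z)"
  unfolding computable1_def by (rule computable_proj) simp

lemma computable2_proj1: "computable2 (\<lambda>x y. x)"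
  unfolding computable2_def by (rule computable_proj) simp

lemma computable2_proj2: "computable2 (\<lambda>x y. y)"
  unfolding computable2_def using computable_proj[of 1 2] by simp

lemma computable3_proj1: "computable3 (\<lambda>x y w. x)"
  unfolding computable3_def by (rule computable_proj) simp

lemma computable3_proj2: "computable3 (\<lambda>x y w. y)"
  unfolding computable3_def using computable_proj[of 1 3] by simp

lemma computable3_proj3: "computable3 (\<lambda>x y w. w)"
  unfolding computable3_def using computable_proj[of 2 3] by simp

lemma computable1_Suc [computable_intros]: "computable1 F \<Longrightarrow> computable1 (\<lambda>z. Suc (F z))"
  using computable1_compose1[of Suc F] computable_succ unfolding computable1_def by simp

lemma computable2_rec_nat:
  assumes g: "computable1 g" and h: "computable3 h"
  shows "computable2 (\<lambda>n y. rec_nat (g y) (\<lambda>k r. h k r y) n)"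
proof -
  have "computable (Suc 1) (\<lambda>xs. rec_nat (g (tl xs ! 0)) (\<lambda>k r. h ((k # r # tl xs) ! 0) ((k # r # tl xs) ! 1) ((k # r # tl xs) ! 2)) (hd xs))"
    using g h unfolding computable1_def computable3_def
    by (intro computable_prec) (simp_all add: numeral_3_eq_3)
  then have "computable 2 (\<lambda>xs. rec_nat (g (tl xs ! 0)) (\<lambda>k r. h k r (tl xs ! 0)) (hd xs))"
    by (simp add: numeral_2_eq_2)
  then show ?thesis unfolding computable2_def
    by (rule computable_cong) (auto simp: length_eq_2_iff)
qed

lemma computable2_primrec:
  assumes g: "computable1 g" and h: "computable3 h"
    and F0: "\<And>y. F 0 y = g y" and FSuc: "\<And>n y. F (Suc n) y = h n (F n y) y"
  shows "computable2 F"
proof -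
  have "F = (\<lambda>n y. rec_nat (g y) (\<lambda>k r. h k r y) n)"
  proof (intro ext)
    fix n y show "F n y = rec_nat (g y) (\<lambda>k r. h k r y) n" by (induction n) (simp_all add: F0 FSuc)
  qed
  then show ?thesis using computable2_rec_nat[OF g h] by simp
qed

lemma computable1_Least:
  assumes f: "computable2 f" and ex: "\<And>x. \<exists>y. f y x = 0"
  shows "computable1 (\<lambda>x. LEAST y. f y x = 0)"
proof -
  have "computable 1 (\<lambda>xs. LEAST y. f ((y # xs) ! 0) ((y # xs) ! 1) = 0)"
    using f ex unfolding computable2_def
    by (intro computable_mn) (auto simp: length_eq_1_iff numeral_2_eq_2)
  then show ?thesis unfolding computable1_def by simp
qed

lemma computable1_recf:
  assumes "computable1 f" shows "\<exists>r. \<forall>x. eval r [x] (f x)"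
proof -
  obtain r where "\<forall>xs. length xs = 1 \<longrightarrow> eval r xs (f (xs ! 0))"
    using assms unfolding computable1_def computable_def by blast
  then have "eval r [x] (f x)" for x by (metis length_Cons list.size(3) nth_Cons_0 One_nat_def)
  then show ?thesis by blast
qed

abbreviation nfst :: "nat \<Rightarrow> nat" where "nfst w \<equiv> fst (prod_decode w)"
abbreviation nsnd :: "nat \<Rightarrow> nat" where "nsnd w \<equiv> snd (prod_decode w)"
abbreviation npair :: "nat \<Rightarrow> nat \<Rightarrow> nat" where "npair a b \<equiv> prod_encode (a, b)"

lemma computable2_add: "computable2 (\<lambda>x y. x + y)"
  by (rule computable2_primrec[OF computable1_id computable3_compose1[OF computable1_Suc[OF computable1_id] computable3_proj2]]) auto

lemma computable1_pred: "computable1 (\<lambda>n. n - 1)"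
proof -
  have "computable2 (\<lambda>n y. n - 1)"
    by (rule computable2_primrec[OF computable1_const computable3_proj1]) auto
  from computable1_compose2[OF this computable1_id computable1_id] show ?thesis by simp
qed

lemma computable2_diff: "computable2 (\<lambda>x y. x - y)"
proof -
  have "computable2 (\<lambda>n y. y - n)"
    by (rule computable2_primrec[OF computable1_id computable3_compose1[OF computable1_pred computable3_proj2]]) auto
  from computable2_compose2[OF this computable2_proj2 computable2_proj1] show ?thesis by simp
qed

lemma computable2_mult: "computable2 (\<lambda>x y. x * y)"
  by (rule computable2_primrec[OF computable1_const computable3_compose2[OF computable2_add computable3_proj2 computable3_proj3]]) auto

lemma computable1_triangle: "computable1 triangle"
proof -
  have "computable2 (\<lambda>n y. triangle n)"
    by (rule computable2_primrec[OF computable1_const computable3_compose2[OF computable2_add computable3_proj2 computable3_compose1[OF computable1_Suc[OF computable1_id] computable3_proj1]]]) auto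
  from computable1_compose2[OF this computable1_id computable1_id] show ?thesis by simp
qed

lemma computable2_npair: "computable2 (\<lambda>a b. npair a b)"
proof -
  have "computable2 (\<lambda>a b. triangle (a + b) + a)"
    by (rule computable2_compose2[OF computable2_add computable2_compose1[OF computable1_triangle computable2_add] computable2_proj1])
  then show ?thesis by (simp add: prod_encode_def)
qed

lemma computable1_add [computable_intros]: "computable1 F \<Longrightarrow> computable1 G \<Longrightarrow> computable1 (\<lambda>z. F z + G z)"
  by (rule computable1_compose2[OF computable2_add])

lemma computable1_diff [computable_intros]: "computable1 F \<Longrightarrow> computable1 G \<Longrightarrow> computable1 (\<lambda>z. F z - G z)"
  by (rule computable1_compose2[OF computable2_diff])

lemma computable1_mult [computable_intros]: "computable1 F \<Longrightarrow> computable1 G \<Longrightarrow> computable1 (\<lambda>z. F z * G z)"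
  by (rule computable1_compose2[OF computable2_mult])

lemma computable1_npair [computable_intros]: "computable1 F \<Longrightarrow> computable1 G \<Longrightarrow> computable1 (\<lambda>z. npair (F z) (G z))"
  by (rule computable1_compose2[OF computable2_npair])

text \<open>Decoding the Cantor pairing: the diagonal \<open>a + b\<close> containing \<open>n\<close> is found by unbounded search.\<close>

definition diag_index :: "nat \<Rightarrow> nat" where
  "diag_index n = (LEAST k. Suc n - triangle (Suc k) = 0)"

lemma diag_index_eq:
  assumes d: "prod_decode n = (a, b)" shows "diag_index n = a + b"
proof -
  have n: "n = triangle (a + b) + a" using prod_decode_inverse[of n] d by (simp add: prod_encode_def)
  show ?thesis unfolding diag_index_def
  proof (rule Least_equality)
    show "Suc n - triangle (Suc (a + b)) = 0" using n by simp
  next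
    fix y assume "Suc n - triangle (Suc y) = 0"
    then have "n < triangle (Suc y)" by simp
    moreover have "triangle (Suc y) \<le> triangle (a + b)" if "Suc y \<le> a + b"
      using that unfolding triangle_def by (intro div_le_mono mult_le_mono) auto
    ultimately show "a + b \<le> y" using n by fastforce
  qed
qed

lemma nfst_diag_index: "nfst n = n - triangle (diag_index n)"
  and nsnd_diag_index: "nsnd n = diag_index n - (n - triangle (diag_index n))"
proof -
  obtain a b where d: "prod_decode n = (a, b)" by fastforce
  have n: "n = triangle (a + b) + a" using prod_decode_inverse[of n] d by (simp add: prod_encode_def)
  show "nfst n = n - triangle (diag_index n)" using diag_index_eq[OF d] d n by simp
  show "nsnd n = diag_index n - (n - triangle (diag_index n))" using diag_index_eq[OF d] d n by simp
qed

lemma computable1_diag_index: "computable1 diag_index"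
  unfolding diag_index_def
proof (rule computable1_Least)
  show "computable2 (\<lambda>k n. Suc n - triangle (Suc k))"
    by (rule computable2_compose2[OF computable2_diff computable2_compose1[OF computable1_Suc[OF computable1_id] computable2_proj2]
          computable2_compose1[OF computable1_triangle computable2_compose1[OF computable1_Suc[OF computable1_id] computable2_proj1]]])
  fix n show "\<exists>y. Suc n - triangle (Suc y) = 0"
    by (rule exI[of _ n]) (induction n, auto)
qed

lemma computable1_nfst [computable_intros]: "computable1 F \<Longrightarrow> computable1 (\<lambda>z. nfst (F z))"
  unfolding nfst_diag_index
  by (intro computable_intros computable1_compose1[OF computable1_triangle] computable1_compose1[OF computable1_diag_index])

lemma computable1_nsnd [computable_intros]: "computable1 F \<Longrightarrow> computable1 (\<lambda>z. nsnd (F z))"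
  unfolding nsnd_diag_index
  by (intro computable_intros computable1_compose1[OF computable1_triangle] computable1_compose1[OF computable1_diag_index])

text \<open>Functions of several arguments are handed to the combinators below uncurried through the
  pairing: \<open>computable1 (\<lambda>w. H (nfst w) (nfst (nsnd w)) (nsnd (nsnd w)))\<close> says that \<open>H\<close>
  is computable as a function of three arguments.\<close>

lemma computable1_rec_nat [computable_intros]:
  assumes A: "computable1 A" and H: "computable1 (\<lambda>w. H (nfst w) (nfst (nsnd w)) (nsnd (nsnd w)))"
      and N: "computable1 N"
  shows "computable1 (\<lambda>z. rec_nat (A z) (\<lambda>k r. H k r z) (N z))"
proof -
  have "computable3 (\<lambda>k r y. (\<lambda>w. H (nfst w) (nfst (nsnd w)) (nsnd (nsnd w))) (npair k (npair r y)))"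
    by (rule computable3_compose1[OF H computable3_compose2[OF computable2_npair computable3_proj1 computable3_compose2[OF computable2_npair computable3_proj2 computable3_proj3]]])
  from computable1_compose2[OF computable2_rec_nat[OF A this] N computable1_id] show ?thesis by simp
qed

lemma computable1_uncurry2:
  assumes "computable1 (\<lambda>w. F (nfst w) (nsnd w))" "computable1 X" "computable1 Y"
  shows "computable1 (\<lambda>z. F (X z) (Y z))"
  using computable1_compose1[OF assms(1) computable1_npair[OF assms(2,3)]] by simp

lemma computable1_uncurry3:
  assumes "computable1 (\<lambda>w. F (nfst w) (nfst (nsnd w)) (nsnd (nsnd w)))" "computable1 X" "computable1 Y" "computable1 Z"
  shows "computable1 (\<lambda>z. F (X z) (Y z) (Z z))"
  using computable1_compose1[OF assms(1) computable1_npair[OF assms(2) computable1_npair[OF assms(3,4)]]] by simp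

definition decidable :: "(nat \<Rightarrow> bool) \<Rightarrow> bool" where
  "decidable P \<longleftrightarrow> computable1 (\<lambda>z. if P z then 1 else 0)"

lemma decidable_cong: "decidable P \<Longrightarrow> (\<And>z. P z = Q z) \<Longrightarrow> decidable Q"
  by (subgoal_tac "P = Q") auto

lemma computable1_If [computable_intros]:
  assumes "decidable P" "computable1 F" "computable1 G"
  shows "computable1 (\<lambda>z. if P z then F z else G z)"
proof -
  have "computable1 (\<lambda>z. (if P z then 1 else 0) * F z + (1 - (if P z then 1 else 0)) * G z)"
    using assms unfolding decidable_def by (intro computable_intros)
  then show ?thesis by (rule computable1_cong) auto
qed

lemma decidable_eq [computable_intros]:
  assumes "computable1 F" "computable1 G" shows "decidable (\<lambda>z. F z = G z)"
  unfolding decidable_def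
  by (rule computable1_cong[of "\<lambda>z. 1 - ((F z - G z) + (G z - F z))"]) (intro computable_intros assms, auto)

lemma decidable_not [computable_intros]:
  assumes "decidable P" shows "decidable (\<lambda>z. \<not> P z)"
  unfolding decidable_def
  by (rule computable1_cong[of "\<lambda>z. 1 - (if P z then 1 else 0)"])
    (intro computable_intros assms[unfolded decidable_def], auto)

lemma decidable_conj [computable_intros]:
  assumes "decidable P" "decidable Q" shows "decidable (\<lambda>z. P z \<and> Q z)"
  unfolding decidable_def
  by (rule computable1_cong[of "\<lambda>z. (if P z then 1 else 0) * (if Q z then 1 else 0)"])
    (intro computable_intros assms[unfolded decidable_def], auto)

lemma decidable_disj [computable_intros]:
  assumes "decidable P" "decidable Q" shows "decidable (\<lambda>z. P z \<or> Q z)"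
  unfolding decidable_def
  by (rule computable1_cong[of "\<lambda>z. 1 - (1 - (if P z then 1 else 0)) * (1 - (if Q z then 1 else 0))"])
    (intro computable_intros assms[unfolded decidable_def], auto)

lemma decidable_imp [computable_intros]:
  assumes "decidable P" "decidable Q" shows "decidable (\<lambda>z. P z \<longrightarrow> Q z)"
  unfolding decidable_def
  by (rule computable1_cong[of "\<lambda>z. 1 - (if P z then 1 else 0) * (1 - (if Q z then 1 else 0))"])
    (intro computable_intros assms[unfolded decidable_def], auto)

lemma decidable_uncurry2:
  "decidable (\<lambda>w. P (nfst w) (nsnd w)) \<Longrightarrow> computable1 X \<Longrightarrow> computable1 Y \<Longrightarrow> decidable (\<lambda>z. P (X z) (Y z))"
  unfolding decidable_def by (rule computable1_uncurry2[where F="\<lambda>a b. if P a b then 1 else 0"])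

lemma length_list_decode_le: "length (list_decode c) \<le> c"
proof (induction c rule: list_decode.induct)
  case 1 then show ?case by simp
next
  case (2 n)
  obtain x y where d: "prod_decode n = (x, y)" by fastforce
  have "y \<le> n" by (metis d prod_decode_inverse le_prod_encode_2)
  with 2 d show ?case by simp
qed

lemma list_decode_nonzero: "c \<noteq> 0 \<Longrightarrow> list_decode c = nfst (c - 1) # list_decode (nsnd (c - 1))"
  by (cases c) (auto split: prod.split)

text \<open>A fold over the list coded by \<open>c\<close> is run as \<open>c\<close> iterations of a step on the pair
  (code of the remaining list, accumulator): \<open>c\<close> bounds the length of the list, and the step is
  the identity once the list is exhausted.\<close>

definition foldl_step :: "(nat \<Rightarrow> nat \<Rightarrow> nat \<Rightarrow> nat) \<Rightarrow> nat \<Rightarrow> nat \<Rightarrow> nat" where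
  "foldl_step F z s = (if nfst s = 0 then s else npair (nsnd (nfst s - 1)) (F (nfst (nfst s - 1)) (nsnd s) z))"

lemma foldl_step_funpow_done: "(foldl_step F z ^^ n) (npair 0 a) = npair 0 a"
  by (induction n) (auto simp: foldl_step_def)

lemma foldl_step_funpow: "length (list_decode c) \<le> n \<Longrightarrow>
   (foldl_step F z ^^ n) (npair c a) = npair 0 (foldl (\<lambda>acc y. F y acc z) a (list_decode c))"
proof (induction n arbitrary: c a)
  case 0 then show ?case by (cases c) (auto split: prod.splits)
next
  case (Suc n)
  show ?case
  proof (cases "c = 0")
    case True then show ?thesis using foldl_step_funpow_done[where n="Suc n" and a=a and F=F and z=z] by simp
  next
    case False
    have st: "foldl_step F z (npair c a) = npair (nsnd (c - 1)) (F (nfst (c - 1)) a z)" using False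
      by (simp add: foldl_step_def)
    have "length (list_decode (nsnd (c - 1))) \<le> n" using Suc.prems list_decode_nonzero[OF False] by simp
    have "(foldl_step F z ^^ Suc n) (npair c a) = (foldl_step F z ^^ n) (foldl_step F z (npair c a))"
      by (simp only: funpow_Suc_right comp_def)
    then show ?thesis using Suc.IH[OF \<open>length (list_decode (nsnd (c - 1))) \<le> n\<close>] st list_decode_nonzero[OF False]
      by simp
  qed
qed

lemma rec_nat_funpow: "rec_nat s (\<lambda>k r. f r) n = (f ^^ n) s"
  by (induction n) auto

lemma computable1_foldl [computable_intros]:
  assumes A: "computable1 A" and F: "computable1 (\<lambda>w. F (nfst w) (nfst (nsnd w)) (nsnd (nsnd w)))"
      and L: "computable1 L"
  shows "computable1 (\<lambda>z. foldl (\<lambda>acc y. F y acc z) (A z) (list_decode (L z)))"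
proof -
  have st: "computable1 (\<lambda>w. foldl_step F (nsnd (nsnd w)) (nfst (nsnd w)))"
    unfolding foldl_step_def
    by (intro computable_intros computable1_uncurry3[OF F])
  have "computable1 (\<lambda>z. rec_nat (npair (L z) (A z)) (\<lambda>k r. foldl_step F z r) (L z))"
    by (rule computable1_rec_nat[OF computable1_npair[OF L A] _ L]) (rule st)
  then have "computable1 (\<lambda>z. nsnd (rec_nat (npair (L z) (A z)) (\<lambda>k r. foldl_step F z r) (L z)))"
    by (rule computable1_nsnd)
  then show ?thesis
    by (rule computable1_cong) (simp add: rec_nat_funpow foldl_step_funpow[OF length_list_decode_le])
qed

lemma computable1_Cons [computable_intros]: assumes "computable1 F" "computable1 G"
  shows "computable1 (\<lambda>z. list_encode (F z # list_decode (G z)))"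
proof -
  have "computable1 (\<lambda>z. Suc (npair (F z) (G z)))" by (intro computable_intros assms)
  then show ?thesis by (rule computable1_cong) simp
qed

lemma computable1_hd [computable_intros]: assumes "computable1 L" shows "computable1 (\<lambda>z. hd (list_decode (L z)))"
proof -
  have "computable1 (\<lambda>z. if L z = 0 then hd [] else nfst (L z - 1))" by (intro computable_intros assms)
  then show ?thesis by (rule computable1_cong) (auto simp: list_decode_nonzero)
qed

lemma computable1_tl [computable_intros]: assumes "computable1 L"
  shows "computable1 (\<lambda>z. list_encode (tl (list_decode (L z))))"
proof -
  have "computable1 (\<lambda>z. if L z = 0 then 0 else nsnd (L z - 1))" by (intro computable_intros assms)
  then show ?thesis by (rule computable1_cong) (auto simp: list_decode_nonzero)
qed

lemma foldl_Cons_list_encode: "foldl (\<lambda>acc y. list_encode (f y # list_decode acc)) c xs = list_encode (rev (map f xs) @ list_decode c)"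
  by (induction xs arbitrary: c) auto

lemma computable1_rev [computable_intros]:
  assumes "computable1 L" shows "computable1 (\<lambda>z. list_encode (rev (list_decode (L z))))"
proof -
  have "computable1 (\<lambda>z. foldl (\<lambda>acc y. (\<lambda>y acc z. list_encode (y # list_decode acc)) y acc z) (list_encode []) (list_decode (L z)))"
    by (intro computable_intros assms)
  then show ?thesis by (rule computable1_cong) (simp add: foldl_Cons_list_encode[of "\<lambda>y. y", simplified])
qed

lemma computable1_map [computable_intros]: assumes F: "computable1 (\<lambda>w. F (nfst w) (nsnd w))" and L: "computable1 L"
  shows "computable1 (\<lambda>z. list_encode (map (\<lambda>y. F y z) (list_decode (L z))))"
proof -
  have "computable1 (\<lambda>z. list_encode (rev (list_decode (foldl (\<lambda>acc y. (\<lambda>y acc z. list_encode (F y z # list_decode acc)) y acc z) (list_encode []) (list_decode (L z))))))"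
    by (intro computable_intros L computable1_uncurry2[OF F])
  then show ?thesis
    by (rule computable1_cong) (simp only: foldl_Cons_list_encode list_encode_inverse rev_rev_ident append_Nil2)
qed

lemma foldl_filter_list_encode: "foldl (\<lambda>acc y. if p y then list_encode (y # list_decode acc) else acc) c xs = list_encode (rev (filter p xs) @ list_decode c)"
  by (induction xs arbitrary: c) auto

lemma computable1_filter [computable_intros]: assumes P: "decidable (\<lambda>w. P (nfst w) (nsnd w))" and L: "computable1 L"
  shows "computable1 (\<lambda>z. list_encode (filter (\<lambda>y. P y z) (list_decode (L z))))"
proof -
  have "computable1 (\<lambda>z. list_encode (rev (list_decode (foldl (\<lambda>acc y. (\<lambda>y acc z. if P y z then list_encode (y # list_decode acc) else acc) y acc z) (list_encode []) (list_decode (L z))))))"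
    by (intro computable_intros L decidable_uncurry2[OF P])
  then show ?thesis
    by (rule computable1_cong) (simp only: foldl_filter_list_encode list_encode_inverse rev_rev_ident append_Nil2)
qed

lemma computable1_append [computable_intros]: assumes F: "computable1 F" and G: "computable1 G"
  shows "computable1 (\<lambda>z. list_encode (list_decode (F z) @ list_decode (G z)))"
proof -
  have "computable1 (\<lambda>z. foldl (\<lambda>acc y. (\<lambda>y acc z. list_encode (y # list_decode acc)) y acc z) (G z) (list_decode (list_encode (rev (list_decode (F z))))))"
    by (intro computable_intros G F)
  moreover have "foldl (\<lambda>acc y. list_encode (y # list_decode acc)) c xs = list_encode (rev xs @ list_decode c)" for c xs
    using foldl_Cons_list_encode[of "\<lambda>y. y" c xs] by simp
  ultimately show ?thesis by simp
qed

lemma foldl_append_list_encode: "foldl (\<lambda>acc c. list_encode (list_decode acc @ g c)) d xs = list_encode (list_decode d @ concat (map g xs))"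
  by (induction xs arbitrary: d) auto

lemma computable1_concat [computable_intros]: assumes L: "computable1 L"
  shows "computable1 (\<lambda>z. list_encode (concat (map list_decode (list_decode (L z)))))"
proof -
  have "computable1 (\<lambda>z. foldl (\<lambda>acc y. (\<lambda>y acc z. list_encode (list_decode acc @ list_decode y)) y acc z) (list_encode []) (list_decode (L z)))"
    by (intro computable_intros L)
  then show ?thesis by (rule computable1_cong) (simp add: foldl_append_list_encode)
qed

lemma foldl_Suc_length: "foldl (\<lambda>a y. Suc a) a xs = a + length xs"
  by (induction xs arbitrary: a) auto

lemma computable1_length [computable_intros]: assumes L: "computable1 L"
  shows "computable1 (\<lambda>z. length (list_decode (L z)))"
proof -
  have "computable1 (\<lambda>z. foldl (\<lambda>acc y. (\<lambda>y acc z. Suc acc) y acc z) 0 (list_decode (L z)))"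
    by (intro computable_intros L)
  then show ?thesis by (rule computable1_cong) (simp add: foldl_Suc_length)
qed

lemma foldl_ball: "foldl (\<lambda>acc y. if p y then acc else 0) a xs = (if \<forall>y\<in>set xs. p y then a else 0)"
  by (induction xs arbitrary: a) auto

lemma decidable_ball [computable_intros]: assumes P: "decidable (\<lambda>w. P (nfst w) (nsnd w))" and L: "computable1 L"
  shows "decidable (\<lambda>z. \<forall>y\<in>set (list_decode (L z)). P y z)"
proof -
  have "computable1 (\<lambda>z. foldl (\<lambda>acc y. (\<lambda>y acc z. if P y z then acc else 0) y acc z) 1 (list_decode (L z)))"
    by (intro computable_intros L decidable_uncurry2[OF P])
  then show ?thesis unfolding decidable_def by (rule computable1_cong) (simp add: foldl_ball)
qed

lemma decidable_bex [computable_intros]: assumes P: "decidable (\<lambda>w. P (nfst w) (nsnd w))" and L: "computable1 L"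
  shows "decidable (\<lambda>z. \<exists>y\<in>set (list_decode (L z)). P y z)"
proof -
  have "decidable (\<lambda>z. \<not> (\<forall>y\<in>set (list_decode (L z)). \<not> P y z))"
    by (intro computable_intros L P)
  then show ?thesis by (rule decidable_cong) blast
qed

lemma foldl_count_list: "foldl (\<lambda>a y. if y = x then Suc a else a) a xs = a + count_list xs x"
  by (induction xs arbitrary: a) auto

lemma computable1_count_list [computable_intros]: assumes L: "computable1 L" and X: "computable1 X"
  shows "computable1 (\<lambda>z. count_list (list_decode (L z)) (X z))"
proof -
  have "computable1 (\<lambda>z. foldl (\<lambda>acc y. (\<lambda>y acc z. if y = X z then Suc acc else acc) y acc z) 0 (list_decode (L z)))"
    by (intro computable_intros L computable1_compose1[OF X])
  then show ?thesis by (rule computable1_cong) (simp add: foldl_count_list)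
qed

definition remove1_step :: "nat \<Rightarrow> nat \<Rightarrow> nat \<Rightarrow> nat" where
  "remove1_step x s y = (if nfst s = 1 \<and> y = x then npair 0 (nsnd s) else npair (nfst s) (list_encode (y # list_decode (nsnd s))))"

lemma foldl_remove1_step_done: "foldl (remove1_step x) (npair 0 c) xs = npair 0 (list_encode (rev xs @ list_decode c))"
  by (induction xs arbitrary: c) (auto simp: remove1_step_def)

lemma foldl_remove1_step: "foldl (remove1_step x) (npair 1 c) xs = npair (if x \<in> set xs then 0 else 1) (list_encode (rev (remove1 x xs) @ list_decode c))"
  by (induction xs arbitrary: c) (auto simp: remove1_step_def foldl_remove1_step_done)

lemma computable1_remove1 [computable_intros]: assumes L: "computable1 L" and X: "computable1 X"
  shows "computable1 (\<lambda>z. list_encode (remove1 (X z) (list_decode (L z))))"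
proof -
  have "computable1 (\<lambda>z. list_encode (rev (list_decode (nsnd (foldl (\<lambda>acc y. (\<lambda>y acc z. remove1_step (X z) acc y) y acc z) (npair 1 (list_encode [])) (list_decode (L z)))))))"
    unfolding remove1_step_def
    by (intro computable_intros L computable1_compose1[OF X])
  then show ?thesis by (rule computable1_cong) (simp add: foldl_remove1_step[simplified])
qed

lemma computable1_n_lists [computable_intros]: assumes N: "computable1 N" and L: "computable1 L"
  shows "computable1 (\<lambda>z. list_encode (map list_encode (List.n_lists (N z) (list_decode (L z)))))"
proof -
  have "computable1 (\<lambda>z. rec_nat (list_encode [list_encode []]) (\<lambda>k r. (\<lambda>k r z. list_encode (concat (map list_decode (list_decode (list_encode (map (\<lambda>c. list_encode (map (\<lambda>y. list_encode (y # list_decode c)) (list_decode (L z)))) (list_decode r))))))) k r z) (N z))"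
    by (intro computable_intros N computable1_compose1[OF L])
  moreover have "rec_nat (list_encode [list_encode []]) (\<lambda>k r. list_encode (concat (map list_decode (list_decode (list_encode (map (\<lambda>c. list_encode (map (\<lambda>y. list_encode (y # list_decode c)) xs)) (list_decode r))))))) n
     = list_encode (map list_encode (List.n_lists n xs))" for n xs
    by (induction n) (simp_all add: map_concat o_def)
  ultimately show ?thesis by simp
qed

lemma computable1_upt [computable_intros]: assumes N: "computable1 N" shows "computable1 (\<lambda>z. list_encode [0..<N z])"
proof -
  have "computable1 (\<lambda>z. rec_nat (list_encode []) (\<lambda>k r. (\<lambda>k r z. list_encode (list_decode r @ list_decode (list_encode (k # list_decode (list_encode []))))) k r z) (N z))"
    by (intro computable_intros N)
  moreover have "rec_nat (list_encode []) (\<lambda>k r. list_encode (list_decode r @ list_decode (list_encode (k # list_decode (list_encode []))))) n = list_encode [0..<n]" for n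
    by (induction n) simp_all
  ultimately show ?thesis by simp
qed

lemma foldl_list_encode: "foldl (\<lambda>acc y. list_encode (g y (list_decode acc))) c xs = list_encode (foldl (\<lambda>acc y. g y acc) (list_decode c) xs)"
  by (induction xs arbitrary: c) auto

lemma n_lists_map: "List.n_lists n (map f xs) = map (map f) (List.n_lists n xs)"
  by (induction n) (simp_all add: map_concat o_def)

lemma mset_eq_iff_count_list: "mset xs = mset ys \<longleftrightarrow> (\<forall>x\<in>set xs. count_list xs x = count_list ys x)
     \<and> (\<forall>x\<in>set ys. count_list xs x = count_list ys x)"
proof
  assume "mset xs = mset ys" then show "(\<forall>x\<in>set xs. count_list xs x = count_list ys x)
       \<and> (\<forall>x\<in>set ys. count_list xs x = count_list ys x)"
    by (metis count_mset)
next
  assume a: "(\<forall>x\<in>set xs. count_list xs x = count_list ys x) \<and> (\<forall>x\<in>set ys. count_list xs x = count_list ys x)"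
  show "mset xs = mset ys"
  proof (rule multiset_eqI)
    fix x show "count (mset xs) x = count (mset ys) x"
    proof (cases "x \<in> set xs \<or> x \<in> set ys")
      case True then show ?thesis using a by (auto simp: count_mset)
    next
      case False then show ?thesis by (metis count_mset_0_iff)
    qed
  qed
qed

lemma decidable_mset_eq [computable_intros]: assumes X: "computable1 X" and Y: "computable1 Y"
  shows "decidable (\<lambda>z. mset (list_decode (X z)) = mset (list_decode (Y z)))"
proof -
  have "decidable (\<lambda>z. (\<forall>x\<in>set (list_decode (X z)). count_list (list_decode (X z)) x = count_list (list_decode (Y z)) x) \<and>
     (\<forall>x\<in>set (list_decode (Y z)). count_list (list_decode (X z)) x = count_list (list_decode (Y z)) x))"
    by (intro computable_intros computable1_compose1[OF X] computable1_compose1[OF Y] X Y)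
  then show ?thesis by (rule decidable_cong) (simp only: mset_eq_iff_count_list)
qed

lemma firing_pre_post: "firing (pre t) t (post t)"
  by (simp add: firing_def)

lemma firing_frame: assumes "firing m t m'" shows "firing (m + r) t (m' + r)"
proof -
  have p: "pre t \<subseteq># m" and m': "m' = m - pre t + post t" using assms by (auto simp: firing_def)
  have "pre t \<subseteq># m + r" using p by (meson mset_subset_eq_add_left subset_mset.order_trans)
  moreover have "m' + r = m + r - pre t + post t"
  proof (rule multiset_eqI)
    fix a
    have "count (pre t) a \<le> count m a" using p by (simp add: subseteq_mset_def)
    then show "count (m' + r) a = count (m + r - pre t + post t) a" unfolding m' by simp
  qed
  ultimately show ?thesis by (simp add: firing_def)
qed

lemma fire_seq_frame: "fire_seq m \<sigma> m' \<Longrightarrow> fire_seq (m + r) \<sigma> (m' + r)"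
  by (induction \<sigma> arbitrary: m) (auto dest: firing_frame)

lemma fire_seq_deterministic: "fire_seq m \<sigma> m1 \<Longrightarrow> fire_seq m \<sigma> m2 \<Longrightarrow> m1 = m2"
  by (induction \<sigma> arbitrary: m) (auto simp: firing_def)

lemma fire_seq_append: "fire_seq m (xs @ ys) m'' \<longleftrightarrow> (\<exists>m'. fire_seq m xs m' \<and> fire_seq m' ys m'')"
  by (induction xs arbitrary: m) auto

lemma fire_seq_preseq_subset: "fire_seq m \<sigma> m' \<Longrightarrow> preseq \<sigma> \<subseteq># m"
proof (induction \<sigma> arbitrary: m)
  case Nil then show ?case by simp
next
  case (Cons t \<sigma>)
  then obtain m1 where f: "firing m t m1" and r: "fire_seq m1 \<sigma> m'" by auto
  have IH: "preseq \<sigma> \<subseteq># m1" using Cons.IH r by blast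
  have m1: "m1 = (m - pre t) + post t" and p: "pre t \<subseteq># m" using f by (auto simp: firing_def)
  show ?case unfolding subseteq_mset_def
  proof
    fix a
    have "count (preseq \<sigma>) a \<le> count m a - count (pre t) a + count (post t) a"
      using IH unfolding m1 subseteq_mset_def by simp
    moreover have "count (pre t) a \<le> count m a" using p unfolding subseteq_mset_def by simp
    ultimately show "count (preseq (t # \<sigma>)) a \<le> count m a" by simp
  qed
qed

lemma fire_seq_preseq: "fire_seq (preseq \<sigma>) \<sigma> (postseq \<sigma>)"
proof (induction \<sigma>)
  case Nil then show ?case by simp
next
  case (Cons t \<sigma>)
  let ?P = "preseq \<sigma>"
  have f: "firing (pre t + (?P - post t)) t ((?P - post t) + post t)" by (simp add: firing_def)
  have eq: "(?P - post t) + post t = ?P + (post t - ?P)"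
    by (rule multiset_eqI) simp
  have "fire_seq (?P + (post t - ?P)) \<sigma> (postseq \<sigma> + (post t - ?P))"
    by (rule fire_seq_frame[OF Cons.IH])
  with f eq show ?case by auto
qed

lemma preseq_append: "preseq (xs @ ys) = preseq xs + (preseq ys - postseq xs)"
proof (induction xs)
  case Nil then show ?case by simp
next
  case (Cons t xs)
  show ?case
  proof (rule multiset_eqI)
    fix a
    have "count (preseq (xs @ ys)) a = count (preseq xs) a + (count (preseq ys) a - count (postseq xs) a)"
      using Cons by simp
    then show "count (preseq ((t # xs) @ ys)) a = count (preseq (t # xs) + (preseq ys - postseq (t # xs))) a"
      by simp
  qed
qed

lemma postseq_append: "postseq (xs @ ys) = postseq ys + (postseq xs - preseq ys)"
proof (induction xs)
  case Nil then show ?case by simp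
next
  case (Cons t xs)
  show ?case
  proof (rule multiset_eqI)
    fix a
    have "count (postseq (xs @ ys)) a = count (postseq ys) a + (count (postseq xs) a - count (preseq ys) a)"
      using Cons by simp
    then show "count (postseq ((t # xs) @ ys)) a = count (postseq ys + (postseq (t # xs) - preseq ys)) a"
      by (simp add: preseq_append)
  qed
qed

definition reach :: "'p multiset \<Rightarrow> ('p,'l) trans list \<Rightarrow> 'p multiset" where
  "reach m xs = foldl (\<lambda>m t. m - pre t + post t) m xs"

lemma befores_append: "befores m (xs @ ys) = befores m xs @ befores (reach m xs) ys"
  by (induction xs arbitrary: m) (auto simp: reach_def)

lemma fire_seq_reach: "fire_seq m xs m' \<Longrightarrow> m' = reach m xs"
  by (induction xs arbitrary: m) (auto simp: reach_def firing_def)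

lemma postseq_reach: "postseq \<sigma> = reach (preseq \<sigma>) \<sigma>"
  by (rule fire_seq_reach[OF fire_seq_preseq])

lemma fire_seq_consuming_preseq_iff:
  "fire_seq m \<sigma> m' \<and> m - preseq \<sigma> = {#} \<longleftrightarrow> preseq \<sigma> = m \<and> m' = postseq \<sigma>"
proof
  assume a: "fire_seq m \<sigma> m' \<and> m - preseq \<sigma> = {#}"
  then have m: "preseq \<sigma> = m"
    using fire_seq_preseq_subset by (metis Diff_eq_empty_iff_mset subset_mset.antisym)
  then show "preseq \<sigma> = m \<and> m' = postseq \<sigma>"
    using a fire_seq_preseq[of \<sigma>] fire_seq_deterministic by metis
next
  assume "preseq \<sigma> = m \<and> m' = postseq \<sigma>"
  then show "fire_seq m \<sigma> m' \<and> m - preseq \<sigma> = {#}" using fire_seq_preseq[of \<sigma>] by auto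
qed

lemma addcl_empty_left_iff: "({#}, x) \<in> addcl R \<longleftrightarrow> x = {#}"
  by (auto elim: addcl.cases intro: addcl.empty)

lemma addcl_size: "(x, y) \<in> addcl R \<Longrightarrow> size x = size y"
  by (induction rule: addcl.induct) auto

lemma addcl_converse: "(x, y) \<in> addcl (R\<inverse>) \<longleftrightarrow> (y, x) \<in> addcl R"
proof
  show "(x, y) \<in> addcl (R\<inverse>) \<Longrightarrow> (y, x) \<in> addcl R"
    by (induction rule: addcl.induct) (auto intro: addcl.intros)
  show "(y, x) \<in> addcl R \<Longrightarrow> (x, y) \<in> addcl (R\<inverse>)"
    by (induction rule: addcl.induct) (auto intro: addcl.intros)
qed

lemma addcl_set_mset: "(x, y) \<in> addcl R \<Longrightarrow> R \<subseteq> S \<times> S \<Longrightarrow> set_mset x \<subseteq> S \<and> set_mset y \<subseteq> S"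
  by (induction rule: addcl.induct) auto

lemma addcl_split: "(m1, m2) \<in> addcl R \<Longrightarrow> a \<subseteq># m1 \<Longrightarrow>
   \<exists>p r. (a, p) \<in> addcl R \<and> (m1 - a, r) \<in> addcl R \<and> m2 = p + r"
proof (induction arbitrary: a rule: addcl.induct)
  case empty then show ?case by (auto intro: addcl.empty)
next
  case (add s1 s2 m1 m2)
  show ?case
  proof (cases "s1 \<in># a")
    case True
    then have "a - {#s1#} \<subseteq># m1" using add.prems by (metis insert_subset_eq_iff diff_single_eq_union)
    then obtain p r where pr: "(a - {#s1#}, p) \<in> addcl R" "(m1 - (a - {#s1#}), r) \<in> addcl R" "m2 = p + r"
      using add.IH by blast
    have "(a, add_mset s2 p) \<in> addcl R" using addcl.add[OF add.hyps(1) pr(1)] True by simp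
    moreover have "add_mset s1 m1 - a = m1 - (a - {#s1#})" using True by (metis insert_DiffM add_mset_diff_bothsides)
    ultimately show ?thesis using pr(2,3) by auto
  next
    case False
    then have "a \<subseteq># m1" using add.prems by (metis Diff_eq_empty_iff_mset minus_add_mset_if_not_in_lhs)
    then obtain p r where pr: "(a, p) \<in> addcl R" "(m1 - a, r) \<in> addcl R" "m2 = p + r"
      using add.IH by blast
    have "(add_mset s1 m1 - a, add_mset s2 r) \<in> addcl R"
      using addcl.add[OF add.hyps(1) pr(2)] False by simp
    then show ?thesis using pr(1,3) by auto
  qed
qed

lemma addcl_iff_list: "(x, y) \<in> addcl R \<longleftrightarrow> (\<exists>qs. set qs \<subseteq> R \<and> mset (map fst qs) = x \<and> mset (map snd qs) = y)"
proof
  show "(x, y) \<in> addcl R \<Longrightarrow> \<exists>qs. set qs \<subseteq> R \<and> mset (map fst qs) = x \<and> mset (map snd qs) = y"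
  proof (induction rule: addcl.induct)
    case empty then show ?case by (intro exI[of _ "[]"]) auto
  next
    case (add s1 s2 m1 m2)
    then obtain qs where "set qs \<subseteq> R" "mset (map fst qs) = m1" "mset (map snd qs) = m2" by blast
    then show ?case using add.hyps by (intro exI[of _ "(s1, s2) # qs"]) auto
  qed
next
  assume "\<exists>qs. set qs \<subseteq> R \<and> mset (map fst qs) = x \<and> mset (map snd qs) = y"
  then obtain qs where "set qs \<subseteq> R" "mset (map fst qs) = x" "mset (map snd qs) = y" by blast
  then show "(x, y) \<in> addcl R"
  proof (induction qs arbitrary: x y)
    case Nil then show ?case by (auto intro: addcl.empty)
  next
    case (Cons q qs)
    then show ?case by (cases q) (auto intro: addcl.add)
  qed
qed


section \<open>Answering a single move\<close>

text \<open>\<open>answers\<close> is clause (1) of a branching place bisimulation for one related pair and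
  one move; clause (2) is clause (1) for the converse relation (\<open>answers_converse\<close>).\<close>

definition answers :: "'l \<Rightarrow> 'p set \<Rightarrow> ('p,'l) trans set \<Rightarrow> ('p \<times> 'p) set \<Rightarrow> 'p multiset \<Rightarrow> 'p multiset \<Rightarrow> ('p,'l) trans \<Rightarrow> bool" where
"answers tau S T R m1 m2 t1 \<longleftrightarrow>
        (tau_seq_trans tau t1 \<and>
          (\<exists>\<sigma> m2'. tau_seq tau S T \<sigma> \<and> fire_seq m2 \<sigma> m2' \<and> Psi (pre t1) \<sigma> (addcl R) \<and>
             (pre t1, postseq \<sigma>) \<in> addcl R \<and> (post t1, postseq \<sigma>) \<in> addcl R \<and>
             (m1 - pre t1, m2 - preseq \<sigma>) \<in> addcl R))
        \<or> (\<exists>\<sigma> t2 m m2'. t2 \<in> T \<and> tau_seq tau S T \<sigma> \<and> fire_seq m2 \<sigma> m \<and> firing m t2 m2' \<and>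
             postseq \<sigma> = pre t2 \<and> lab t1 = lab t2 \<and> Psi (pre t1) \<sigma> (addcl R) \<and>
             (pre t1, postseq \<sigma>) \<in> addcl R \<and> (post t1, post t2) \<in> addcl R \<and>
             (m1 - pre t1, m2 - preseq \<sigma>) \<in> addcl R)"

definition simulation_half :: "'l \<Rightarrow> 'p set \<Rightarrow> ('p,'l) trans set \<Rightarrow> ('p \<times> 'p) set \<Rightarrow> bool" where
"simulation_half tau S T R \<longleftrightarrow> (\<forall>(m1, m2)\<in>addcl R. \<forall>t1\<in>T. \<forall>m1'. firing m1 t1 m1' \<longrightarrow> answers tau S T R m1 m2 t1)"

lemma Psi_converse: "Psi m \<sigma> (addcl (R\<inverse>)) = Phi \<sigma> m (addcl R)"
  by (simp add: Psi_def Phi_def addcl_converse)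

lemma answers_converse: "answers tau S T (R\<inverse>) m2 m1 t2 \<longleftrightarrow>
       (tau_seq_trans tau t2 \<and>
          (\<exists>\<sigma> m1'. tau_seq tau S T \<sigma> \<and> fire_seq m1 \<sigma> m1' \<and> Phi \<sigma> (pre t2) (addcl R) \<and>
             (postseq \<sigma>, pre t2) \<in> addcl R \<and> (postseq \<sigma>, post t2) \<in> addcl R \<and>
             (m1 - preseq \<sigma>, m2 - pre t2) \<in> addcl R))
        \<or> (\<exists>\<sigma> t1 m m1'. t1 \<in> T \<and> tau_seq tau S T \<sigma> \<and> fire_seq m1 \<sigma> m \<and> firing m t1 m1' \<and>
             postseq \<sigma> = pre t1 \<and> lab t1 = lab t2 \<and> Phi \<sigma> (pre t2) (addcl R) \<and>
             (postseq \<sigma>, pre t2) \<in> addcl R \<and> (post t1, post t2) \<in> addcl R \<and>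
             (m1 - preseq \<sigma>, m2 - pre t2) \<in> addcl R)"
  unfolding answers_def Psi_converse addcl_converse by (simp only: eq_commute[where a="lab t2"])

lemma branching_place_bisim_iff_halves: "branching_place_bisim tau S A T R \<longleftrightarrow> R \<subseteq> S \<times> S \<and> simulation_half tau S T R
     \<and> simulation_half tau S T (R\<inverse>)"
proof -
  have c2: "simulation_half tau S T (R\<inverse>)
       \<longleftrightarrow> (\<forall>(m1, m2)\<in>addcl R. \<forall>t2\<in>T. \<forall>m2'. firing m2 t2 m2' \<longrightarrow> answers tau S T (R\<inverse>) m2 m1 t2)"
    unfolding simulation_half_def
  proof
    assume H: "\<forall>(m1, m2)\<in>addcl (R\<inverse>). \<forall>t1\<in>T. \<forall>m1'. firing m1 t1 m1' \<longrightarrow> answers tau S T (R\<inverse>) m1 m2 t1"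
    show "\<forall>(m1, m2)\<in>addcl R. \<forall>t2\<in>T. \<forall>m2'. firing m2 t2 m2' \<longrightarrow> answers tau S T (R\<inverse>) m2 m1 t2"
    proof (clarify)
      fix m1 m2 t2 m2' assume "(m1, m2) \<in> addcl R" "t2 \<in> T" "firing m2 t2 m2'"
      then show "answers tau S T (R\<inverse>) m2 m1 t2" using H addcl_converse[of m2 m1 R] by blast
    qed
  next
    assume H: "\<forall>(m1, m2)\<in>addcl R. \<forall>t2\<in>T. \<forall>m2'. firing m2 t2 m2' \<longrightarrow> answers tau S T (R\<inverse>) m2 m1 t2"
    show "\<forall>(m1, m2)\<in>addcl (R\<inverse>). \<forall>t1\<in>T. \<forall>m1'. firing m1 t1 m1' \<longrightarrow> answers tau S T (R\<inverse>) m1 m2 t1"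
    proof (clarify)
      fix m1 m2 t1 m1' assume "(m1, m2) \<in> addcl (R\<inverse>)" "t1 \<in> T" "firing m1 t1 m1'"
      then show "answers tau S T (R\<inverse>) m1 m2 t1" using H addcl_converse[of m1 m2 R] by blast
    qed
  qed
  have bs: "(\<forall>(a, b)\<in>X. P a b \<and> Q a b) \<longleftrightarrow> (\<forall>(a, b)\<in>X. P a b) \<and> (\<forall>(a, b)\<in>X. Q a b)" for X P Q
    by auto
  show ?thesis
    unfolding branching_place_bisim_def c2 answers_converse
    unfolding simulation_half_def answers_def bs by (rule refl)
qed

lemma answers_pre_iff:
  "answers tau S T R (pre t1) p2 t1 \<longleftrightarrow>
   (tau_seq_trans tau t1 \<and> (\<exists>\<sigma>. tau_seq tau S T \<sigma> \<and> preseq \<sigma> = p2 \<and> Psi (pre t1) \<sigma> (addcl R) \<and>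
       (pre t1, postseq \<sigma>) \<in> addcl R \<and> (post t1, postseq \<sigma>) \<in> addcl R))
   \<or> (\<exists>\<sigma> t2. t2 \<in> T \<and> tau_seq tau S T \<sigma> \<and> preseq \<sigma> = p2 \<and> postseq \<sigma> = pre t2 \<and> lab t1 = lab t2 \<and>
       Psi (pre t1) \<sigma> (addcl R) \<and> (pre t1, postseq \<sigma>) \<in> addcl R \<and> (post t1, post t2) \<in> addcl R)"
proof -
  have consumed: "fire_seq p2 \<sigma> m \<and> (pre t1 - pre t1, p2 - preseq \<sigma>) \<in> addcl R \<longleftrightarrow> preseq \<sigma> = p2 \<and> m = postseq \<sigma>"
    for \<sigma> m
    using fire_seq_consuming_preseq_iff[of p2 \<sigma> m] by (simp add: addcl_empty_left_iff)
  show ?thesis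
    unfolding answers_def using consumed firing_pre_post by (smt (verit))
qed

lemma answers_frame:
  assumes c: "answers tau S T R (pre t1) p2 t1" and r: "(m1 - pre t1, r) \<in> addcl R"
  shows "answers tau S T R m1 (p2 + r) t1"
  using c unfolding answers_pre_iff
proof (elim disjE exE conjE)
  fix \<sigma> assume a: "tau_seq_trans tau t1" "tau_seq tau S T \<sigma>" "preseq \<sigma> = p2" "Psi (pre t1) \<sigma> (addcl R)"
      "(pre t1, postseq \<sigma>) \<in> addcl R" "(post t1, postseq \<sigma>) \<in> addcl R"
  have f: "fire_seq (p2 + r) \<sigma> (postseq \<sigma> + r)" using fire_seq_frame[OF fire_seq_preseq[of \<sigma>]] unfolding a(3) .
  have e: "(m1 - pre t1, p2 + r - preseq \<sigma>) \<in> addcl R" using r a(3) by simp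
  show ?thesis unfolding answers_def using a f e by (intro disjI1 conjI exI[of _ \<sigma>] exI[of _ "postseq \<sigma> + r"])
next
  fix \<sigma> t2 assume a: "t2 \<in> T" "tau_seq tau S T \<sigma>" "preseq \<sigma> = p2" "postseq \<sigma> = pre t2" "lab t1 = lab t2"
      "Psi (pre t1) \<sigma> (addcl R)" "(pre t1, postseq \<sigma>) \<in> addcl R" "(post t1, post t2) \<in> addcl R"
  have f1: "fire_seq (p2 + r) \<sigma> (postseq \<sigma> + r)" using fire_seq_frame[OF fire_seq_preseq[of \<sigma>]] unfolding a(3) .
  have "firing (postseq \<sigma>) t2 (post t2)" using firing_pre_post[of t2] unfolding a(4)[symmetric] .
  then have f2: "firing (postseq \<sigma> + r) t2 (post t2 + r)" by (rule firing_frame)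
  have e: "(m1 - pre t1, p2 + r - preseq \<sigma>) \<in> addcl R" using r a(3) by simp
  show ?thesis unfolding answers_def using a f1 f2 e
    by (intro disjI2 conjI exI[of _ \<sigma>] exI[of _ t2] exI[of _ "postseq \<sigma> + r"] exI[of _ "post t2 + r"])
qed

lemma simulation_half_iff_pre: "simulation_half tau S T R
     \<longleftrightarrow> (\<forall>t1\<in>T. \<forall>p2. (pre t1, p2) \<in> addcl R \<longrightarrow> answers tau S T R (pre t1) p2 t1)"
proof
  assume H: "simulation_half tau S T R"
  have h: "\<And>m1 m2 t1 m1'. (m1, m2) \<in> addcl R \<Longrightarrow> t1 \<in> T \<Longrightarrow> firing m1 t1 m1' \<Longrightarrow> answers tau S T R m1 m2 t1"
    using H unfolding simulation_half_def by blast
  show "\<forall>t1\<in>T. \<forall>p2. (pre t1, p2) \<in> addcl R \<longrightarrow> answers tau S T R (pre t1) p2 t1"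
  proof (intro ballI allI impI)
    fix t1 p2 assume "t1 \<in> T" "(pre t1, p2) \<in> addcl R"
    then show "answers tau S T R (pre t1) p2 t1" using h firing_pre_post by blast
  qed
next
  assume H: "\<forall>t1\<in>T. \<forall>p2. (pre t1, p2) \<in> addcl R \<longrightarrow> answers tau S T R (pre t1) p2 t1"
  show "simulation_half tau S T R" unfolding simulation_half_def
  proof (clarify)
    fix m1 m2 t1 m1' assume m: "(m1, m2) \<in> addcl R" and t: "t1 \<in> T" and f: "firing m1 t1 m1'"
    have "pre t1 \<subseteq># m1" using f by (simp add: firing_def)
    then obtain p r where pr: "(pre t1, p) \<in> addcl R" "(m1 - pre t1, r) \<in> addcl R" "m2 = p + r"
      using addcl_split[OF m] by blast
    have "answers tau S T R (pre t1) p t1" using H t pr(1) by blast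
    then show "answers tau S T R m1 m2 t1" unfolding pr(3) using pr(2) by (rule answers_frame)
  qed
qed


section \<open>Decomposing \<open>\<tau>\<close>-sequential sequences\<close>

definition tau_decomp :: "'l \<Rightarrow> 'p set \<Rightarrow> ('p,'l) trans set \<Rightarrow> ('p,'l) trans list list \<Rightarrow> bool" where
  "tau_decomp tau S T \<sigma>s \<longleftrightarrow> \<sigma>s \<noteq> [] \<and> (\<forall>\<rho>\<in>set \<sigma>s. tau_1_seq tau S T \<rho>) \<and>
     preseq (concat \<sigma>s) = sum_list (map preseq \<sigma>s) \<and> postseq (concat \<sigma>s) = sum_list (map postseq \<sigma>s)"

lemma tau_seq_iff_decomp: "tau_seq tau S T \<sigma> \<longleftrightarrow> (\<exists>\<sigma>s. tau_decomp tau S T \<sigma>s \<and> \<sigma> = concat \<sigma>s)"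
  unfolding tau_seq_def tau_k_seq_def tau_decomp_def by (auto simp: Suc_le_eq)

definition chained :: "('p,'l) trans list \<Rightarrow> bool" where
  "chained \<rho> \<longleftrightarrow> (\<forall>i. Suc i < length \<rho> \<longrightarrow> post (\<rho> ! i) = pre (\<rho> ! Suc i))"

lemma tau_1_seq_iff_chained: "tau_1_seq tau S T \<rho> \<longleftrightarrow> \<rho> \<noteq> [] \<and>
     (\<forall>t\<in>set \<rho>. (t \<in> T \<or> (\<exists>s\<in>S. t = idle tau s)) \<and> tau_seq_trans tau t) \<and> chained \<rho>"
  unfolding tau_1_seq_def chained_def by simp

lemma all_nat_iff_zero_Suc: "(\<forall>i. P i) \<longleftrightarrow> P 0 \<and> (\<forall>i. P (Suc i))"
  by (metis not0_implies_Suc)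

lemma chained_Cons: "chained (t # \<rho>) \<longleftrightarrow> (\<rho> \<noteq> [] \<longrightarrow> post t = pre (hd \<rho>)) \<and> chained \<rho>"
proof (cases \<rho>)
  case Nil then show ?thesis by (simp add: chained_def)
next
  case (Cons u \<rho>')
  have "chained (t # u # \<rho>')
       \<longleftrightarrow> (\<forall>i. Suc i < length (t # u # \<rho>') \<longrightarrow> post ((t # u # \<rho>') ! i) = pre ((t # u # \<rho>') ! Suc i))"
    unfolding chained_def ..
  also have "\<dots> \<longleftrightarrow> post t = pre u
       \<and> (\<forall>i. Suc (Suc i) < length (t # u # \<rho>') \<longrightarrow> post ((t # u # \<rho>') ! Suc i) = pre ((t # u # \<rho>') ! Suc (Suc i)))"
    by (subst all_nat_iff_zero_Suc) simp
  also have "\<dots> \<longleftrightarrow> post t = pre u \<and> chained (u # \<rho>')"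
    unfolding chained_def by simp
  finally show ?thesis using Cons by simp
qed

lemma chained_preseq_postseq: "\<rho> \<noteq> [] \<Longrightarrow> chained \<rho> \<Longrightarrow> (\<forall>t\<in>set \<rho>. size (pre t) = 1 \<and> size (post t) = 1) \<Longrightarrow>
   preseq \<rho> = pre (hd \<rho>) \<and> postseq \<rho> = post (last \<rho>)"
proof (induction \<rho>)
  case Nil then show ?case by simp
next
  case (Cons t \<rho>)
  show ?case
  proof (cases "\<rho> = []")
    case True then show ?thesis by simp
  next
    case False
    have c: "post t = pre (hd \<rho>)" "chained \<rho>" using Cons.prems(2) False unfolding chained_Cons by simp_all
    have IH: "preseq \<rho> = pre (hd \<rho>)" "postseq \<rho> = post (last \<rho>)" using Cons.IH False c(2) Cons.prems(3) by auto
    show ?thesis using False c IH by simp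
  qed
qed

lemma tau_1_seq_preseq_postseq: "tau_1_seq tau S T \<rho> \<Longrightarrow> preseq \<rho> = pre (hd \<rho>) \<and> postseq \<rho> = post (last \<rho>)"
  unfolding tau_1_seq_iff_chained tau_seq_trans_def by (intro chained_preseq_postseq) auto

lemma preseq_postseq_concat_cong: "list_all2 (\<lambda>a b. preseq a = preseq b \<and> postseq a = postseq b) xs ys \<Longrightarrow>
   preseq (concat xs) = preseq (concat ys) \<and> postseq (concat xs) = postseq (concat ys)"
  by (induction rule: list_all2_induct) (simp_all add: preseq_append postseq_append)

lemma chained_append: "chained (xs @ ys) \<longleftrightarrow> chained xs \<and> chained ys
     \<and> (xs \<noteq> [] \<and> ys \<noteq> [] \<longrightarrow> post (last xs) = pre (hd ys))"
proof (induction xs)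
  case Nil then show ?case by (simp add: chained_def)
next
  case (Cons x xs)
  show ?case
  proof (cases "xs = []")
    case True
    have n: "chained []" "chained [x]" by (simp_all add: chained_def)
    show ?thesis using True n by (simp add: chained_Cons) blast
  next
    case False
    have "chained ((x # xs) @ ys) \<longleftrightarrow> post x = pre (hd xs) \<and> chained (xs @ ys)"
      using False by (simp add: chained_Cons)
    also have "\<dots> \<longleftrightarrow> post x = pre (hd xs) \<and> chained xs \<and> chained ys \<and> (ys \<noteq> [] \<longrightarrow> post (last xs) = pre (hd ys))"
      using Cons.IH False by simp
    also have "\<dots> \<longleftrightarrow> chained (x # xs) \<and> chained ys \<and> (x # xs \<noteq> [] \<and> ys \<noteq> [] \<longrightarrow> post (last (x # xs)) = pre (hd ys))"
      using False by (simp add: chained_Cons)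
    finally show ?thesis .
  qed
qed

lemma fire_seq_chained: "fire_seq M \<beta> M' \<Longrightarrow> \<beta> \<noteq> [] \<Longrightarrow> chained \<beta> \<Longrightarrow> M' = M - pre (hd \<beta>) + post (last \<beta>)"
proof (induction \<beta> arbitrary: M)
  case Nil then show ?case by simp
next
  case (Cons t \<beta>)
  obtain M1 where f: "firing M t M1" "fire_seq M1 \<beta> M'" using Cons.prems by auto
  have M1: "M1 = M - pre t + post t" using f(1) by (simp add: firing_def)
  show ?case
  proof (cases "\<beta> = []")
    case True then show ?thesis using f M1 by simp
  next
    case False
    have c: "post t = pre (hd \<beta>)" "chained \<beta>" using Cons.prems(3) False unfolding chained_Cons by simp_all
    have "M' = M1 - pre (hd \<beta>) + post (last \<beta>)" using Cons.IH f(2) False c(2) by blast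
    then show ?thesis using M1 c(1) False by simp
  qed
qed


lemma fire_seq_cycle:
  assumes "fire_seq M \<beta> M'" "\<beta> \<noteq> []" "chained \<beta>" "post (last \<beta>) = pre (hd \<beta>)"
  shows "M' = M"
proof -
  have "pre (hd \<beta>) \<subseteq># M" using assms(1,2) by (cases \<beta>) (auto simp: firing_def)
  then show ?thesis using fire_seq_chained[OF assms(1-3)] assms(4) by simp
qed

lemma tau_1_seq_pre_singleton:
  assumes "tau_1_seq tau S T \<rho>" "\<forall>t\<in>T. set_mset (pre t) \<subseteq> S" "t \<in> set \<rho>"
  shows "\<exists>a\<in>S. pre t = {#a#}"
proof -
  have t: "t \<in> T \<or> (\<exists>s\<in>S. t = idle tau s)" "size (pre t) = 1"
    using assms(1,3) unfolding tau_1_seq_iff_chained tau_seq_trans_def by auto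
  show ?thesis
  proof (cases "t \<in> T")
    case True
    obtain a where a: "pre t = {#a#}" using size_1_singleton_mset[OF t(2)] by blast
    then have "a \<in> S" using assms(2) True by auto
    then show ?thesis using a by blast
  next
    case False
    then obtain s where "s \<in> S" "t = idle tau s" using t(1) by blast
    then show ?thesis by (auto simp: idle_def pre_def)
  qed
qed

lemma tau_1_seq_repeated_pre:
  assumes fin: "finite S" and r: "tau_1_seq tau S T \<rho>" and h: "\<forall>t\<in>T. set_mset (pre t) \<subseteq> S"
    and l: "card S < length \<rho>"
  shows "\<exists>i j. i < j \<and> j < length \<rho> \<and> pre (\<rho> ! i) = pre (\<rho> ! j)"
proof -
  have sub: "set (map pre \<rho>) \<subseteq> (\<lambda>a. {#a#}) ` S"
  proof
    fix x assume "x \<in> set (map pre \<rho>)"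
    then obtain t where t: "t \<in> set \<rho>" "x = pre t" by auto
    then obtain a where "a \<in> S" "pre t = {#a#}" using tau_1_seq_pre_singleton[OF r h] by blast
    then show "x \<in> (\<lambda>a. {#a#}) ` S" using t by auto
  qed
  have "card (set (map pre \<rho>)) \<le> card ((\<lambda>a. {#a#}) ` S)"
    by (rule card_mono[OF finite_imageI[OF fin] sub])
  also have "\<dots> \<le> card S" by (rule card_image_le[OF fin])
  finally have c: "card (set (map pre \<rho>)) < length (map pre \<rho>)" using l by simp
  have "\<not> distinct (map pre \<rho>)"
  proof
    assume "distinct (map pre \<rho>)"
    then have "card (set (map pre \<rho>)) = length (map pre \<rho>)" by (rule distinct_card)
    with c show False by simp
  qed
  then obtain i j where ij: "i < length \<rho>" "j < length \<rho>" "i \<noteq> j" "pre (\<rho> ! i) = pre (\<rho> ! j)"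
    unfolding distinct_conv_nth by auto
  show ?thesis
  proof (cases "i < j")
    case True then show ?thesis using ij by blast
  next
    case False then have "j < i" using ij(3) by simp
    then show ?thesis using ij by (intro exI[of _ j] exI[of _ i]) auto
  qed
qed

lemma tau_1_seq_cut_cycle:
  assumes fin: "finite S" and h: "\<forall>t\<in>T. set_mset (pre t) \<subseteq> S"
    and r: "tau_1_seq tau S T \<rho>" and long: "card S < length \<rho>"
  obtains \<alpha> \<beta> \<gamma> where "\<rho> = \<alpha> @ \<beta> @ \<gamma>" "\<beta> \<noteq> []" "chained \<beta>" "post (last \<beta>) = pre (hd \<beta>)"
    "tau_1_seq tau S T (\<alpha> @ \<gamma>)" "preseq (\<alpha> @ \<gamma>) = preseq \<rho>" "postseq (\<alpha> @ \<gamma>) = postseq \<rho>"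
proof -
  obtain i j where ij: "i < j" "j < length \<rho>" "pre (\<rho> ! i) = pre (\<rho> ! j)"
    using tau_1_seq_repeated_pre[OF fin r h long] by blast
  define \<alpha> where "\<alpha> = take i \<rho>"
  define \<beta> where "\<beta> = drop i (take j \<rho>)"
  define \<gamma> where "\<gamma> = drop j \<rho>"
  have split: "\<rho> = \<alpha> @ \<beta> @ \<gamma>"
  proof -
    have "\<alpha> @ \<beta> = take j \<rho>" using ij unfolding \<alpha>_def \<beta>_def
      by (metis append_take_drop_id min.absorb1 less_imp_le take_take)
    then show ?thesis unfolding \<gamma>_def by (metis append.assoc append_take_drop_id)
  qed
  have bne: "\<beta> \<noteq> []" and gne: "\<gamma> \<noteq> []" using ij unfolding \<beta>_def \<gamma>_def by simp_all
  have hb: "hd \<beta> = \<rho> ! i" and hg: "hd \<gamma> = \<rho> ! j"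
    using ij unfolding \<beta>_def \<gamma>_def by (simp_all add: hd_drop_conv_nth)
  have r1: "\<rho> \<noteq> []" "\<forall>t\<in>set \<rho>. (t \<in> T \<or> (\<exists>s\<in>S. t = idle tau s)) \<and> tau_seq_trans tau t" "chained \<rho>"
    using r unfolding tau_1_seq_iff_chained by auto
  have ch: "chained \<alpha>" "chained \<beta>" "chained \<gamma>" "\<alpha> \<noteq> [] \<longrightarrow> post (last \<alpha>) = pre (hd \<beta>)"
      "post (last \<beta>) = pre (hd \<gamma>)"
    using r1(3) bne gne unfolding split chained_append by auto
  have r': "tau_1_seq tau S T (\<alpha> @ \<gamma>)"
    unfolding tau_1_seq_iff_chained chained_append
    using gne r1(2) ch hb hg ij(3) unfolding split by auto
  have "pre (hd (\<alpha> @ \<gamma>)) = pre (hd \<rho>)"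
  proof (cases "\<alpha> = []")
    case True
    then have "i = 0" using ij r1(1) unfolding \<alpha>_def by simp
    then show ?thesis using True hg ij(3) r1(1) by (simp add: hd_conv_nth)
  next
    case False then show ?thesis unfolding split by simp
  qed
  moreover have "last (\<alpha> @ \<gamma>) = last \<rho>" using gne unfolding split by simp
  ultimately have "preseq (\<alpha> @ \<gamma>) = preseq \<rho>" "postseq (\<alpha> @ \<gamma>) = postseq \<rho>"
    using tau_1_seq_preseq_postseq[OF r] tau_1_seq_preseq_postseq[OF r'] by simp_all
  moreover have "post (last \<beta>) = pre (hd \<beta>)" using ch(5) hb hg ij(3) by simp
  ultimately show ?thesis using that split bne ch(2) r' by blast
qed

text \<open>\<open>\<sigma>s'\<close> is as good a decomposition as \<open>\<sigma>s\<close> for the conditions of a branching place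
  bisimulation: it consumes and produces the same places and passes through no new markings.\<close>

definition shortcut :: "('p,'l) trans list list \<Rightarrow> ('p,'l) trans list list \<Rightarrow> bool" where
  "shortcut \<sigma>s' \<sigma>s \<longleftrightarrow> length \<sigma>s' = length \<sigma>s \<and>
     preseq (concat \<sigma>s') = preseq (concat \<sigma>s) \<and> postseq (concat \<sigma>s') = postseq (concat \<sigma>s) \<and>
     set (befores (preseq (concat \<sigma>s')) (concat \<sigma>s')) \<subseteq> set (befores (preseq (concat \<sigma>s)) (concat \<sigma>s))"

lemma shortcut_refl: "shortcut \<sigma>s \<sigma>s"
  by (simp add: shortcut_def)

lemma shortcut_trans: "shortcut \<sigma>s'' \<sigma>s' \<Longrightarrow> shortcut \<sigma>s' \<sigma>s \<Longrightarrow> shortcut \<sigma>s'' \<sigma>s"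
  by (auto simp: shortcut_def) blast

lemma sum_list_length_update_less:
  assumes "length y < length (xs ! k)" "k < length xs"
  shows "sum_list (map length (xs[k := y])) < sum_list (map length xs)"
proof -
  have "length (xs ! k) \<le> sum_list (map length xs)"
    using assms(2) by (metis elem_le_sum_list length_map nth_map)
  then show ?thesis using assms by (simp add: map_update sum_list_update)
qed

lemma befores_cut_cycle:
  assumes "\<beta> \<noteq> []" "chained \<beta>" "post (last \<beta>) = pre (hd \<beta>)" "fire_seq M0 (xs @ \<beta> @ ys) M"
  shows "set (befores M0 (xs @ ys)) \<subseteq> set (befores M0 (xs @ \<beta> @ ys))"
proof -
  obtain M1 M2 where f1: "fire_seq M0 xs M1" and f2: "fire_seq M1 \<beta> M2"
    using assms(4) unfolding fire_seq_append by blast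
  have "reach M0 xs = M1" "reach M1 \<beta> = M1"
    using fire_seq_reach[OF f1] fire_seq_reach[OF f2] fire_seq_cycle[OF f2 assms(1-3)] by simp_all
  then show ?thesis unfolding befores_append by auto
qed

lemma tau_decomp_shorten_step:
  assumes fin: "finite S" and h: "\<forall>t\<in>T. set_mset (pre t) \<subseteq> S" and g: "tau_decomp tau S T \<sigma>s"
    and k: "k < length \<sigma>s" and long: "card S < length (\<sigma>s ! k)"
  obtains \<sigma>s' where "tau_decomp tau S T \<sigma>s'" "shortcut \<sigma>s' \<sigma>s"
    "sum_list (map length \<sigma>s') < sum_list (map length \<sigma>s)"
proof -
  have r: "tau_1_seq tau S T (\<sigma>s ! k)" using g k unfolding tau_decomp_def by auto
  obtain \<alpha> \<beta> \<gamma> where split: "\<sigma>s ! k = \<alpha> @ \<beta> @ \<gamma>" and cyc: "\<beta> \<noteq> []" "chained \<beta>" "post (last \<beta>) = pre (hd \<beta>)"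
    and r': "tau_1_seq tau S T (\<alpha> @ \<gamma>)"
    and pp: "preseq (\<alpha> @ \<gamma>) = preseq (\<sigma>s ! k)" "postseq (\<alpha> @ \<gamma>) = postseq (\<sigma>s ! k)"
    using tau_1_seq_cut_cycle[OF fin h r long] by blast
  define \<sigma>s' where "\<sigma>s' = \<sigma>s[k := \<alpha> @ \<gamma>]"
  have mp: "map preseq \<sigma>s' = map preseq \<sigma>s" "map postseq \<sigma>s' = map postseq \<sigma>s"
    using k by (simp_all add: \<sigma>s'_def map_update pp) (metis length_map list_update_id nth_map)+
  have "list_all2 (\<lambda>a b. preseq a = preseq b \<and> postseq a = postseq b) \<sigma>s' \<sigma>s"
    unfolding list_all2_conv_all_nth \<sigma>s'_def using pp k by (auto simp: nth_list_update)
  then have ce: "preseq (concat \<sigma>s') = preseq (concat \<sigma>s)" "postseq (concat \<sigma>s') = postseq (concat \<sigma>s)"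
    using preseq_postseq_concat_cong by blast+
  have g': "tau_decomp tau S T \<sigma>s'"
    unfolding tau_decomp_def
  proof (intro conjI)
    show "\<sigma>s' \<noteq> []" using g unfolding tau_decomp_def \<sigma>s'_def by simp
    show "\<forall>\<rho>\<in>set \<sigma>s'. tau_1_seq tau S T \<rho>"
      using g r' unfolding tau_decomp_def \<sigma>s'_def by (auto dest: set_update_subset_insert[THEN subsetD])
    show "preseq (concat \<sigma>s') = sum_list (map preseq \<sigma>s')" using ce mp g unfolding tau_decomp_def by simp
    show "postseq (concat \<sigma>s') = sum_list (map postseq \<sigma>s')" using ce mp g unfolding tau_decomp_def by simp
  qed
  have "length (\<alpha> @ \<gamma>) < length (\<sigma>s ! k)" using cyc(1) unfolding split by simp
  then have lt: "sum_list (map length \<sigma>s') < sum_list (map length \<sigma>s)"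
    unfolding \<sigma>s'_def using k by (rule sum_list_length_update_less)
  define X where "X = concat (take k \<sigma>s)"
  define Y where "Y = concat (drop (Suc k) \<sigma>s)"
  have c1: "concat \<sigma>s = (X @ \<alpha>) @ \<beta> @ (\<gamma> @ Y)"
    using id_take_nth_drop[OF k] unfolding X_def Y_def
    by (metis append.assoc concat.simps(2) concat_append split)
  have c2: "concat \<sigma>s' = (X @ \<alpha>) @ (\<gamma> @ Y)"
    unfolding \<sigma>s'_def upd_conv_take_nth_drop[OF k] X_def Y_def by simp
  have "set (befores (preseq (concat \<sigma>s)) (concat \<sigma>s')) \<subseteq> set (befores (preseq (concat \<sigma>s)) (concat \<sigma>s))"
    using befores_cut_cycle[OF cyc, of "preseq (concat \<sigma>s)" "X @ \<alpha>" "\<gamma> @ Y"] fire_seq_preseq[of "concat \<sigma>s"]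
    unfolding c1 c2 by blast
  then have "shortcut \<sigma>s' \<sigma>s" using ce unfolding shortcut_def \<sigma>s'_def by simp
  with g' lt show ?thesis using that by blast
qed

lemma tau_decomp_shorten:
  assumes fin: "finite S" and h: "\<forall>t\<in>T. set_mset (pre t) \<subseteq> S" and g: "tau_decomp tau S T \<sigma>s"
  obtains \<sigma>s' where "tau_decomp tau S T \<sigma>s'" "shortcut \<sigma>s' \<sigma>s" "\<forall>\<rho>\<in>set \<sigma>s'. length \<rho> \<le> card S"
  using g
proof (induction "sum_list (map length \<sigma>s)" arbitrary: \<sigma>s thesis rule: less_induct)
  case less
  show ?case
  proof (cases "\<forall>\<rho>\<in>set \<sigma>s. length \<rho> \<le> card S")
    case True then show ?thesis using less.prems shortcut_refl by blast
  next
    case False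
    then obtain k where k: "k < length \<sigma>s" "card S < length (\<sigma>s ! k)"
      by (auto simp: in_set_conv_nth not_le)
    obtain \<sigma>s1 where s1: "tau_decomp tau S T \<sigma>s1" "shortcut \<sigma>s1 \<sigma>s"
        "sum_list (map length \<sigma>s1) < sum_list (map length \<sigma>s)"
      using tau_decomp_shorten_step[OF fin h less.prems(2) k] by blast
    obtain \<sigma>s2 where "tau_decomp tau S T \<sigma>s2" "shortcut \<sigma>s2 \<sigma>s1" "\<forall>\<rho>\<in>set \<sigma>s2. length \<rho> \<le> card S"
      using less.hyps[OF s1(3) _ s1(1)] by blast
    then show ?thesis using less.prems(1) shortcut_trans[OF _ s1(2)] by blast
  qed
qed

text \<open>In the encoded net (\<open>\<tau> = 0\<close>) a \<open>\<tau>\<close>-sequential transition is determined by its input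
  and output place, and is coded by their pair.\<close>

definition edge :: "nat \<Rightarrow> (nat, nat) trans" where "edge c = ({#nfst c#}, 0, {#nsnd c#})"

lemma pre_edge[simp]: "pre (edge c) = {#nfst c#}" and post_edge[simp]: "post (edge c) = {#nsnd c#}" and lab_edge[simp]: "lab (edge c) = 0"
  by (simp_all add: edge_def pre_def post_def lab_def)

lemma tau_seq_trans_iff_edge: "tau_seq_trans 0 t \<longleftrightarrow> (\<exists>c. t = edge c)"
proof
  assume a: "tau_seq_trans 0 t"
  obtain x where x: "pre t = {#x#}" using a size_1_singleton_mset unfolding tau_seq_trans_def by blast
  obtain y where y: "post t = {#y#}" using a size_1_singleton_mset unfolding tau_seq_trans_def by blast
  have l: "lab t = 0" using a unfolding tau_seq_trans_def by simp
  have "t = edge (npair x y)" using x y l by (cases t) (simp add: edge_def pre_def post_def lab_def)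
  then show "\<exists>c. t = edge c" by blast
next
  assume "\<exists>c. t = edge c"
  then show "tau_seq_trans 0 t" by (auto simp: tau_seq_trans_def)
qed

definition is_tau_triple :: "nat list \<times> nat \<times> nat list \<Rightarrow> bool" where
  "is_tau_triple t \<longleftrightarrow> fst (snd t) = 0 \<and> length (fst t) = 1 \<and> length (snd (snd t)) = 1"

definition tau_edges :: "nat list \<Rightarrow> (nat list \<times> nat \<times> nat list) list \<Rightarrow> nat list" where
  "tau_edges ls lt = map (\<lambda>t. npair (hd (fst t)) (hd (snd (snd t)))) (filter is_tau_triple lt) @ map (\<lambda>s. npair s s) ls"

lemma trans_of_simps[simp]: "pre (trans_of t) = mset (fst t)" "post (trans_of t) = mset (snd (snd t))" "lab (trans_of t) = fst (snd t)"
  by (cases t; simp add: trans_of_def pre_def post_def lab_def)+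

lemma edge_eq_trans_of: "edge c = trans_of t \<longleftrightarrow> is_tau_triple t \<and> c = npair (hd (fst t)) (hd (snd (snd t)))"
proof -
  obtain a l b where t: "t = (a, l, b)" by (cases t) auto
  have "edge c = trans_of t \<longleftrightarrow> {#nfst c#} = mset a \<and> 0 = l \<and> {#nsnd c#} = mset b"
    unfolding t by (simp add: edge_def trans_of_def)
  also have "\<dots> \<longleftrightarrow> a = [nfst c] \<and> l = 0 \<and> b = [nsnd c]" by auto
  also have "\<dots> \<longleftrightarrow> is_tau_triple t \<and> c = npair (hd (fst t)) (hd (snd (snd t)))"
  proof
    assume "a = [nfst c] \<and> l = 0 \<and> b = [nsnd c]"
    then show "is_tau_triple t \<and> c = npair (hd (fst t)) (hd (snd (snd t)))" unfolding t is_tau_triple_def by simp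
  next
    assume a: "is_tau_triple t \<and> c = npair (hd (fst t)) (hd (snd (snd t)))"
    then have "length a = 1" "length b = 1" "l = 0" unfolding t is_tau_triple_def by auto
    then obtain x y where "a = [x]" "b = [y]" by (metis length_0_conv length_Suc_conv One_nat_def)
    then show "a = [nfst c] \<and> l = 0 \<and> b = [nsnd c]" using a \<open>l = 0\<close> unfolding t by simp
  qed
  finally show ?thesis .
qed

lemma edge_in_net_iff: "(edge c \<in> trans_of ` set lt \<or> (\<exists>s\<in>set ls. edge c = idle 0 s)) \<longleftrightarrow> c \<in> set (tau_edges ls lt)"
proof -
  have 1: "edge c \<in> trans_of ` set lt
       \<longleftrightarrow> c \<in> set (map (\<lambda>t. npair (hd (fst t)) (hd (snd (snd t)))) (filter is_tau_triple lt))"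
  proof -
    have "edge c \<in> trans_of ` set lt \<longleftrightarrow> (\<exists>t\<in>set lt. edge c = trans_of t)" by auto
    also have "\<dots> \<longleftrightarrow> (\<exists>t\<in>set lt. is_tau_triple t \<and> c = npair (hd (fst t)) (hd (snd (snd t))))"
      by (simp add: edge_eq_trans_of)
    finally show ?thesis by auto
  qed
  have 2: "(\<exists>s\<in>set ls. edge c = idle 0 s) \<longleftrightarrow> c \<in> set (map (\<lambda>s. npair s s) ls)"
  proof -
    have "edge c = idle 0 s \<longleftrightarrow> c = npair s s" for s
    proof
      assume "edge c = idle 0 s"
      then have "nfst c = s" "nsnd c = s" by (simp_all add: edge_def idle_def)
      then show "c = npair s s" by (metis prod.collapse prod_decode_inverse)
    next
      assume "c = npair s s" then show "edge c = idle 0 s" by (simp add: edge_def idle_def)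
    qed
    then show ?thesis by auto
  qed
  show ?thesis unfolding tau_edges_def using 1 2 by auto
qed

fun linked :: "nat list \<Rightarrow> bool" where
  "linked [] = True"
| "linked [x] = True"
| "linked (x # y # xs) = (nsnd x = nfst y \<and> linked (y # xs))"

text \<open>\<open>linked\<close> is evaluated by a fold whose accumulator pairs the verdict so far with the
  successor of the previous edge, \<open>0\<close> standing for ``no edge yet''.\<close>

definition linked_step :: "nat \<Rightarrow> nat \<Rightarrow> nat" where
  "linked_step s y = npair (if nsnd s = 0 \<or> nsnd (nsnd s - 1) = nfst y then nfst s else 0) (Suc y)"

lemma foldl_linked_step: "foldl linked_step (npair a (Suc p)) xs = npair (if linked (p # xs) then a else 0) (Suc (last (p # xs)))"
  by (induction xs arbitrary: a p) (auto simp: linked_step_def)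

lemma decidable_linked [computable_intros]: assumes L: "computable1 L"
  shows "decidable (\<lambda>z. linked (list_decode (L z)))"
proof -
  have c: "computable1 (\<lambda>z. nfst (foldl (\<lambda>acc y. (\<lambda>y acc z. linked_step acc y) y acc z) (npair 1 0) (list_decode (L z))))"
    unfolding linked_step_def
    by (intro computable_intros L)
  have e: "foldl linked_step (npair 1 0) xs = npair (if linked xs then 1 else 0) (case xs of [] \<Rightarrow> 0 | _ \<Rightarrow> Suc (last xs))" for xs
  proof (cases xs)
    case Nil then show ?thesis by simp
  next
    case (Cons y ys)
    have "foldl linked_step (npair 1 0) xs = foldl linked_step (linked_step (npair 1 0) y) ys" using Cons by simp
    also have "linked_step (npair 1 0) y = npair 1 (Suc y)" by (simp add: linked_step_def)
    finally show ?thesis using foldl_linked_step[of 1 y ys] Cons by simp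
  qed
  show ?thesis unfolding decidable_def by (rule computable1_cong[OF c]) (simp only: e, simp)
qed

lemma chained_map_edge: "chained (map edge cs) \<longleftrightarrow> linked cs"
proof (induction cs rule: linked.induct)
  case 1 then show ?case by (simp add: chained_def)
next
  case (2 x) then show ?case by (simp add: chained_def)
next
  case (3 x y xs) then show ?case by (simp add: chained_Cons)
qed

lemma tau_1_seq_iff_edges: "tau_1_seq 0 (set ls) (trans_of ` set lt) \<rho> \<longleftrightarrow>
   (\<exists>cs. \<rho> = map edge cs \<and> cs \<noteq> [] \<and> set cs \<subseteq> set (tau_edges ls lt) \<and> linked cs)"
proof
  assume a: "tau_1_seq 0 (set ls) (trans_of ` set lt) \<rho>"
  then have "\<forall>t\<in>set \<rho>. \<exists>c. t = edge c" unfolding tau_1_seq_iff_chained tau_seq_trans_iff_edge by blast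
  then have "\<exists>cs. \<rho> = map edge cs" unfolding ex_map_conv .
  then obtain cs where cs: "\<rho> = map edge cs" by blast
  show "\<exists>cs. \<rho> = map edge cs \<and> cs \<noteq> [] \<and> set cs \<subseteq> set (tau_edges ls lt) \<and> linked cs"
  proof (intro exI[of _ cs] conjI)
    show "\<rho> = map edge cs" by (rule cs)
    show "cs \<noteq> []" using a cs unfolding tau_1_seq_iff_chained by simp
    show "set cs \<subseteq> set (tau_edges ls lt)"
    proof
      fix x assume "x \<in> set cs"
      then have "edge x \<in> set \<rho>" using cs by simp
      then have "edge x \<in> trans_of ` set lt \<or> (\<exists>s\<in>set ls. edge x = idle 0 s)" using a unfolding tau_1_seq_iff_chained
        by blast
      then show "x \<in> set (tau_edges ls lt)" unfolding edge_in_net_iff .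
    qed
    have "chained (map edge cs)" using a cs unfolding tau_1_seq_iff_chained by simp
    then show "linked cs" unfolding chained_map_edge .
  qed
next
  assume "\<exists>cs. \<rho> = map edge cs \<and> cs \<noteq> [] \<and> set cs \<subseteq> set (tau_edges ls lt) \<and> linked cs"
  then obtain cs where cs: "\<rho> = map edge cs" "cs \<noteq> []" "set cs \<subseteq> set (tau_edges ls lt)" "linked cs" by blast
  show "tau_1_seq 0 (set ls) (trans_of ` set lt) \<rho>"
    unfolding tau_1_seq_iff_chained cs(1) chained_map_edge
    using cs(2,3,4) edge_in_net_iff tau_seq_trans_iff_edge by fastforce
qed

fun pre_edges :: "nat list \<Rightarrow> nat list" where
  "pre_edges [] = []"
| "pre_edges (c # cs) = nfst c # remove1 (nsnd c) (pre_edges cs)"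

lemma pre_edges_mset: "preseq (map edge cs) = mset (pre_edges cs)"
  by (induction cs) auto

definition step_edges :: "nat list \<Rightarrow> nat \<Rightarrow> nat list" where "step_edges ml c = nsnd c # remove1 (nfst c) ml"

fun befores_edges :: "nat list \<Rightarrow> nat list \<Rightarrow> nat list list" where
  "befores_edges ml [] = []"
| "befores_edges ml (c # cs) = ml # befores_edges (step_edges ml c) cs"

lemma befores_edges_mset: "befores (mset ml) (map edge cs) = map mset (befores_edges ml cs)"
proof (induction cs arbitrary: ml)
  case Nil then show ?case by simp
next
  case (Cons c cs) show ?case using Cons.IH[of "step_edges ml c"] by (simp add: step_edges_def)
qed

definition reach_edges :: "nat list \<Rightarrow> nat list \<Rightarrow> nat list" where "reach_edges ml cs = foldl step_edges ml cs"

lemma reach_edges_mset: "reach (mset ml) (map edge cs) = mset (reach_edges ml cs)"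
  unfolding reach_def reach_edges_def
proof (induction cs arbitrary: ml)
  case Nil then show ?case by simp
next
  case (Cons c cs) show ?case using Cons.IH[of "step_edges ml c"] by (simp add: step_edges_def)
qed

definition short_edge_lists :: "nat list \<Rightarrow> (nat list \<times> nat \<times> nat list) list \<Rightarrow> nat list list" where
  "short_edge_lists ls lt = concat (map (\<lambda>j. List.n_lists (Suc j) (tau_edges ls lt)) [0..<length ls])"

lemma short_edge_lists_iff: "cs \<in> set (short_edge_lists ls lt) \<longleftrightarrow> cs \<noteq> [] \<and> length cs \<le> length ls
     \<and> set cs \<subseteq> set (tau_edges ls lt)"
proof
  assume "cs \<in> set (short_edge_lists ls lt)"
  then obtain j where "j < length ls" "length cs = Suc j" "set cs \<subseteq> set (tau_edges ls lt)"
    unfolding short_edge_lists_def by (auto simp: set_n_lists)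
  then show "cs \<noteq> [] \<and> length cs \<le> length ls \<and> set cs \<subseteq> set (tau_edges ls lt)" by auto
next
  assume a: "cs \<noteq> [] \<and> length cs \<le> length ls \<and> set cs \<subseteq> set (tau_edges ls lt)"
  then obtain j where j: "length cs = Suc j" by (cases cs) auto
  then have jl: "j < length ls" using a by simp
  have "cs \<in> set (List.n_lists (Suc j) (tau_edges ls lt))" unfolding set_n_lists using a j by simp
  then show "cs \<in> set (short_edge_lists ls lt)" unfolding short_edge_lists_def using jl
    by (force simp del: List.n_lists.simps)
qed

lemma inj_edge: "inj edge"
  by (rule injI) (simp add: edge_def, metis prod.collapse prod_decode_inverse)

lemma edge_lists_preseq_postseq:
  assumes "cs \<noteq> []" "linked cs"
  shows "preseq (map edge cs) = {#nfst (hd cs)#}" "postseq (map edge cs) = {#nsnd (last cs)#}"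
proof -
  have "preseq (map edge cs) = pre (hd (map edge cs)) \<and> postseq (map edge cs) = post (last (map edge cs))"
    using assms by (intro chained_preseq_postseq) (auto simp: chained_map_edge)
  then show "preseq (map edge cs) = {#nfst (hd cs)#}" "postseq (map edge cs) = {#nsnd (last cs)#}"
    using assms(1) by (simp_all add: hd_map last_map)
qed

lemma all_tau_1_seq_iff_edge_lists:
  "(\<forall>\<rho>\<in>set \<sigma>s. tau_1_seq 0 (set ls) (trans_of ` set lt) \<rho>) \<longleftrightarrow>
   (\<exists>css. \<sigma>s = map (map edge) css \<and> (\<forall>cs\<in>set css. cs \<noteq> [] \<and> set cs \<subseteq> set (tau_edges ls lt) \<and> linked cs))"
proof (induction \<sigma>s)
  case Nil then show ?case by simp
next
  case (Cons \<rho> \<sigma>s)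
  let ?Q = "\<lambda>cs. cs \<noteq> [] \<and> set cs \<subseteq> set (tau_edges ls lt) \<and> linked cs"
  have "(\<forall>\<rho>'\<in>set (\<rho> # \<sigma>s). tau_1_seq 0 (set ls) (trans_of ` set lt) \<rho>') \<longleftrightarrow>
     (\<exists>cs. \<rho> = map edge cs \<and> ?Q cs) \<and> (\<exists>css. \<sigma>s = map (map edge) css \<and> (\<forall>cs\<in>set css. ?Q cs))"
    using Cons.IH by (simp add: tau_1_seq_iff_edges)
  also have "\<dots> \<longleftrightarrow> (\<exists>css. \<rho> # \<sigma>s = map (map edge) css \<and> (\<forall>cs\<in>set css. ?Q cs))"
  proof
    assume "(\<exists>cs. \<rho> = map edge cs \<and> ?Q cs) \<and> (\<exists>css. \<sigma>s = map (map edge) css \<and> (\<forall>cs\<in>set css. ?Q cs))"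
    then obtain cs css where "\<rho> = map edge cs" "?Q cs" "\<sigma>s = map (map edge) css" "\<forall>cs\<in>set css. ?Q cs"
      by blast
    then show "\<exists>css. \<rho> # \<sigma>s = map (map edge) css \<and> (\<forall>cs\<in>set css. ?Q cs)"
      by (intro exI[of _ "cs # css"]) simp
  qed (auto simp: map_eq_Cons_conv)
  finally show ?case .
qed

lemma tau_decomp_size: "tau_decomp tau S T \<sigma>s \<Longrightarrow> size (preseq (concat \<sigma>s)) = length \<sigma>s"
proof -
  assume g: "tau_decomp tau S T \<sigma>s"
  have "size (preseq \<rho>) = 1" if "\<rho> \<in> set \<sigma>s" for \<rho>
  proof -
    have r: "tau_1_seq tau S T \<rho>" using g that unfolding tau_decomp_def by auto
    then have "hd \<rho> \<in> set \<rho>" unfolding tau_1_seq_iff_chained by auto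
    then show ?thesis using r tau_1_seq_preseq_postseq[OF r] unfolding tau_1_seq_iff_chained tau_seq_trans_def by auto
  qed
  then have "size (sum_list (map preseq \<sigma>s)) = length \<sigma>s"
    by (induction \<sigma>s) auto
  then show ?thesis using g unfolding tau_decomp_def by simp
qed

text \<open>The last edge of \<open>cs\<close> is written \<open>hd (rev cs)\<close>, which is evidently computable, unlike \<open>last\<close>
  on possibly empty lists.\<close>

definition edge_decomp :: "nat list \<Rightarrow> nat list list \<Rightarrow> bool" where
  "edge_decomp p css \<longleftrightarrow> (\<forall>cs\<in>set css. linked cs) \<and>
     mset (pre_edges (concat css)) = mset (map (\<lambda>cs. nfst (hd cs)) css) \<and>
     mset (map (\<lambda>cs. nfst (hd cs)) css) = mset p \<and>
     mset (reach_edges p (concat css)) = mset (map (\<lambda>cs. nsnd (hd (rev cs))) css)"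

lemma edge_decomp_run:
  assumes "preseq (concat (map (map edge) css)) = mset p"
  shows "postseq (concat (map (map edge) css)) = mset (reach_edges p (concat css))"
    and "befores (preseq (concat (map (map edge) css))) (concat (map (map edge) css)) = map mset (befores_edges p (concat css))"
  using assms postseq_reach[of "concat (map (map edge) css)"]
  by (simp_all add: map_concat[symmetric] reach_edges_mset befores_edges_mset)

lemma tau_decomp_iff_edge_decomp:
  assumes css: "\<forall>cs\<in>set css. cs \<noteq> [] \<and> set cs \<subseteq> set (tau_edges ls lt)" and ne: "css \<noteq> []"
  shows "tau_decomp 0 (set ls) (trans_of ` set lt) (map (map edge) css)
       \<and> preseq (concat (map (map edge) css)) = mset p
     \<longleftrightarrow> edge_decomp p css"
proof -
  have tau1: "(\<forall>\<rho>\<in>set (map (map edge) css). tau_1_seq 0 (set ls) (trans_of ` set lt) \<rho>) \<longleftrightarrow> (\<forall>cs\<in>set css. linked cs)"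
    using css by (auto simp: tau_1_seq_iff_edges inj_map_eq_map[OF inj_edge])
  have pre: "preseq (concat (map (map edge) css)) = mset (pre_edges (concat css))"
    by (simp add: map_concat[symmetric] pre_edges_mset)
  have last: "map (\<lambda>cs. nsnd (hd (rev cs))) css = map (\<lambda>cs. nsnd (last cs)) css"
    using css by (simp add: hd_rev)
  have sums: "sum_list (map preseq (map (map edge) css)) = mset (map (\<lambda>cs. nfst (hd cs)) css)"
      "sum_list (map postseq (map (map edge) css)) = mset (map (\<lambda>cs. nsnd (last cs)) css)"
    if "\<forall>cs\<in>set css. linked cs"
    using css that by (induction css) (auto simp: edge_lists_preseq_postseq)
  show ?thesis
    unfolding tau_decomp_def edge_decomp_def tau1 last
    using ne pre sums edge_decomp_run(1)[of css p] by auto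
qed

lemma tau_decomp_short_edge_lists:
  assumes "tau_decomp 0 (set ls) (trans_of ` set lt) \<sigma>s" "\<forall>\<rho>\<in>set \<sigma>s. length \<rho> \<le> card (set ls)"
  obtains css where "\<sigma>s = map (map edge) css" "set css \<subseteq> set (short_edge_lists ls lt)"
proof -
  obtain css where css: "\<sigma>s = map (map edge) css" "\<forall>cs\<in>set css. cs \<noteq> [] \<and> set cs \<subseteq> set (tau_edges ls lt) \<and> linked cs"
    using assms(1) unfolding tau_decomp_def all_tau_1_seq_iff_edge_lists by blast
  have "set css \<subseteq> set (short_edge_lists ls lt)"
    using css assms(2) card_length[of ls] by (fastforce simp: short_edge_lists_iff)
  with css(1) show ?thesis using that by blast
qed

lemma tau_seq_iff_edge_decomp:
  assumes h: "\<forall>t\<in>trans_of ` set lt. set_mset (pre t) \<subseteq> set ls" and ne: "p \<noteq> []"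
  shows "(\<exists>\<sigma>. tau_seq 0 (set ls) (trans_of ` set lt) \<sigma> \<and> preseq \<sigma> = mset p \<and>
            (\<forall>M\<in>set (befores (preseq \<sigma>) \<sigma>). Good M) \<and> Fin (postseq \<sigma>))
     \<longleftrightarrow> (\<exists>css\<in>set (List.n_lists (length p) (short_edge_lists ls lt)). edge_decomp p css \<and>
            (\<forall>M\<in>set (befores_edges p (concat css)). Good (mset M)) \<and> Fin (mset (reach_edges p (concat css))))"
proof
  assume "\<exists>\<sigma>. tau_seq 0 (set ls) (trans_of ` set lt) \<sigma> \<and> preseq \<sigma> = mset p \<and>
            (\<forall>M\<in>set (befores (preseq \<sigma>) \<sigma>). Good M) \<and> Fin (postseq \<sigma>)"
  then obtain \<sigma>s where g: "tau_decomp 0 (set ls) (trans_of ` set lt) \<sigma>s" and pre: "preseq (concat \<sigma>s) = mset p"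
    and good: "\<forall>M\<in>set (befores (preseq (concat \<sigma>s)) (concat \<sigma>s)). Good M" and fin: "Fin (postseq (concat \<sigma>s))"
    unfolding tau_seq_iff_decomp by blast
  obtain \<sigma>s' where g': "tau_decomp 0 (set ls) (trans_of ` set lt) \<sigma>s'" and sc: "shortcut \<sigma>s' \<sigma>s"
    and short: "\<forall>\<rho>\<in>set \<sigma>s'. length \<rho> \<le> card (set ls)"
    using tau_decomp_shorten[OF _ h g] by blast
  obtain css where css: "\<sigma>s' = map (map edge) css" "set css \<subseteq> set (short_edge_lists ls lt)"
    using tau_decomp_short_edge_lists[OF g' short] by blast
  have pre': "preseq (concat (map (map edge) css)) = mset p" using sc pre css(1) unfolding shortcut_def by simp
  have "length css = length p" using tau_decomp_size[OF g'] pre' css(1) by (metis size_mset length_map)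
  moreover have "edge_decomp p css"
  proof -
    have "\<forall>cs\<in>set css. cs \<noteq> [] \<and> set cs \<subseteq> set (tau_edges ls lt)" using css(2) short_edge_lists_iff by blast
    moreover have "css \<noteq> []" using g' css(1) unfolding tau_decomp_def by simp
    ultimately show ?thesis using tau_decomp_iff_edge_decomp g' pre' css(1) by blast
  qed
  moreover have "\<forall>M\<in>set (befores_edges p (concat css)). Good (mset M)" "Fin (mset (reach_edges p (concat css)))"
    using good fin sc edge_decomp_run[OF pre'] unfolding css(1) shortcut_def by auto
  ultimately show "\<exists>css\<in>set (List.n_lists (length p) (short_edge_lists ls lt)). edge_decomp p css \<and>
            (\<forall>M\<in>set (befores_edges p (concat css)). Good (mset M)) \<and> Fin (mset (reach_edges p (concat css)))"
    using css(2) by (auto simp: set_n_lists)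
next
  assume "\<exists>css\<in>set (List.n_lists (length p) (short_edge_lists ls lt)). edge_decomp p css \<and>
            (\<forall>M\<in>set (befores_edges p (concat css)). Good (mset M)) \<and> Fin (mset (reach_edges p (concat css)))"
  then obtain css where css: "length css = length p" "\<forall>cs\<in>set css. cs \<noteq> [] \<and> set cs \<subseteq> set (tau_edges ls lt)"
    and d: "edge_decomp p css" and good: "\<forall>M\<in>set (befores_edges p (concat css)). Good (mset M)"
    and fin: "Fin (mset (reach_edges p (concat css)))"
    by (auto simp: set_n_lists subset_iff short_edge_lists_iff)
  have "css \<noteq> []" using css(1) ne by auto
  then have g: "tau_decomp 0 (set ls) (trans_of ` set lt) (map (map edge) css)"
    and pre: "preseq (concat (map (map edge) css)) = mset p"
    using tau_decomp_iff_edge_decomp[OF css(2)] d by blast+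
  show "\<exists>\<sigma>. tau_seq 0 (set ls) (trans_of ` set lt) \<sigma> \<and> preseq \<sigma> = mset p \<and>
            (\<forall>M\<in>set (befores (preseq \<sigma>) \<sigma>). Good M) \<and> Fin (postseq \<sigma>)"
  proof (intro exI conjI)
    show "tau_seq 0 (set ls) (trans_of ` set lt) (concat (map (map edge) css))"
      using g unfolding tau_seq_iff_decomp by blast
  qed (use pre good fin edge_decomp_run[OF pre] in simp_all)
qed

definition addcl_check :: "nat list \<Rightarrow> nat list \<Rightarrow> nat list \<Rightarrow> bool" where
  "addcl_check Rl xs ys \<longleftrightarrow> (\<exists>qs\<in>set (List.n_lists (length xs) Rl). mset (map nfst qs) = mset xs \<and> mset (map nsnd qs) = mset ys)"

definition rel_of_codes :: "nat list \<Rightarrow> (nat \<times> nat) set" where "rel_of_codes Rl = (\<lambda>c. (nfst c, nsnd c)) ` set Rl"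

lemma addcl_check_iff: "(mset xs, mset ys) \<in> addcl (rel_of_codes Rl) \<longleftrightarrow> addcl_check Rl xs ys"
proof
  assume "(mset xs, mset ys) \<in> addcl (rel_of_codes Rl)"
  then obtain qs where qs: "set qs \<subseteq> rel_of_codes Rl" "mset (map fst qs) = mset xs" "mset (map snd qs) = mset ys"
    unfolding addcl_iff_list by blast
  define qs' where "qs' = map (\<lambda>(a, b). npair a b) qs"
  have "set qs' \<subseteq> set Rl"
  proof
    fix c assume "c \<in> set qs'"
    then obtain a b where ab: "(a, b) \<in> set qs" "c = npair a b" unfolding qs'_def by auto
    then obtain d where "d \<in> set Rl" "(a, b) = (nfst d, nsnd d)" using qs(1) unfolding rel_of_codes_def by auto
    then show "c \<in> set Rl" using ab by (metis prod.collapse prod_decode_inverse)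
  qed
  moreover have "length qs' = length xs" unfolding qs'_def using qs(2) by (metis length_map size_mset)
  moreover have "map nfst qs' = map fst qs" "map nsnd qs' = map snd qs" unfolding qs'_def by auto
  ultimately show "addcl_check Rl xs ys" unfolding addcl_check_def set_n_lists using qs by (intro bexI[of _ qs']) auto
next
  assume "addcl_check Rl xs ys"
  then obtain qs where qs: "set qs \<subseteq> set Rl" "mset (map nfst qs) = mset xs" "mset (map nsnd qs) = mset ys"
    unfolding addcl_check_def set_n_lists by blast
  show "(mset xs, mset ys) \<in> addcl (rel_of_codes Rl)" unfolding addcl_iff_list
    using qs by (intro exI[of _ "map (\<lambda>c. (nfst c, nsnd c)) qs"]) (auto simp: rel_of_codes_def o_def)
qed



definition final_tau :: "nat list \<Rightarrow> nat list \<times> nat \<times> nat list \<Rightarrow> nat list \<Rightarrow> bool" where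
  "final_tau Rl t F \<longleftrightarrow> addcl_check Rl (fst t) F \<and> addcl_check Rl (snd (snd t)) F"

definition final_visible :: "nat list \<Rightarrow> (nat list \<times> nat \<times> nat list) list \<Rightarrow> nat list \<times> nat \<times> nat list \<Rightarrow> nat list \<Rightarrow> bool" where
  "final_visible Rl lt t F \<longleftrightarrow> addcl_check Rl (fst t) F \<and>
     (\<exists>t2\<in>set lt. mset F = mset (fst t2) \<and> fst (snd t) = fst (snd t2) \<and> addcl_check Rl (snd (snd t)) (snd (snd t2)))"

definition exists_answer :: "nat list \<Rightarrow> nat list \<Rightarrow> (nat list \<times> nat \<times> nat list) list \<Rightarrow> nat list \<times> nat \<times> nat list \<Rightarrow> nat list \<Rightarrow> (nat list \<Rightarrow> bool) \<Rightarrow> bool" where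
  "exists_answer Rl ls lt t p2l Fin
       \<longleftrightarrow> (\<exists>css\<in>set (List.n_lists (length p2l) (short_edge_lists ls lt)). edge_decomp p2l css \<and>
            (\<forall>M\<in>set (befores_edges p2l (concat css)). addcl_check Rl (fst t) M) \<and> Fin (reach_edges p2l (concat css)))"

definition check_half :: "nat list \<Rightarrow> nat list \<Rightarrow> (nat list \<times> nat \<times> nat list) list \<Rightarrow> bool" where
  "check_half Rl ls lt \<longleftrightarrow> (\<forall>t\<in>set lt. \<forall>p2l\<in>set (List.n_lists (length (fst t)) ls). addcl_check Rl (fst t) p2l \<longrightarrow>
     (is_tau_triple t \<and> exists_answer Rl ls lt t p2l (final_tau Rl t)) \<or> exists_answer Rl ls lt t p2l (final_visible Rl lt t))"

lemma exists_answer_iff: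
  assumes h: "\<forall>t\<in>trans_of ` set lt. set_mset (pre t) \<subseteq> set ls" and ne: "p \<noteq> []"
  shows "(\<exists>\<sigma>. tau_seq 0 (set ls) (trans_of ` set lt) \<sigma> \<and> preseq \<sigma> = mset p \<and>
            Psi (mset (fst t)) \<sigma> (addcl (rel_of_codes Rl)) \<and> Fin (postseq \<sigma>))
     \<longleftrightarrow> exists_answer Rl ls lt t p (\<lambda>X. Fin (mset X))"
  unfolding Psi_def exists_answer_def
  using tau_seq_iff_edge_decomp[OF h ne, where Good="\<lambda>M. (mset (fst t), M) \<in> addcl (rel_of_codes Rl)"]
  by (simp add: addcl_check_iff)

lemma answers_iff_exists_answer:
  assumes h: "\<forall>t\<in>trans_of ` set lt. set_mset (pre t) \<subseteq> set ls" and ne: "p \<noteq> []"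
  shows "answers 0 (set ls) (trans_of ` set lt) (rel_of_codes Rl) (pre (trans_of t)) (mset p) (trans_of t) \<longleftrightarrow>
     (is_tau_triple t \<and> exists_answer Rl ls lt t p (final_tau Rl t)) \<or> exists_answer Rl ls lt t p (final_visible Rl lt t)"
proof -
  let ?T = "trans_of ` set lt" and ?Q = "addcl (rel_of_codes Rl)"
  have "final_tau Rl t = (\<lambda>X. (mset (fst t), mset X) \<in> ?Q \<and> (mset (snd (snd t)), mset X) \<in> ?Q)"
    by (simp add: fun_eq_iff final_tau_def addcl_check_iff)
  then have tau: "(\<exists>\<sigma>. tau_seq 0 (set ls) ?T \<sigma> \<and> preseq \<sigma> = mset p \<and> Psi (pre (trans_of t)) \<sigma> ?Q \<and>
       (pre (trans_of t), postseq \<sigma>) \<in> ?Q \<and> (post (trans_of t), postseq \<sigma>) \<in> ?Q)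
     \<longleftrightarrow> exists_answer Rl ls lt t p (final_tau Rl t)"
    using exists_answer_iff[OF h ne, of t Rl "\<lambda>X. (mset (fst t), X) \<in> ?Q \<and> (mset (snd (snd t)), X) \<in> ?Q"]
    by simp
  have "final_visible Rl lt t = (\<lambda>X. (mset (fst t), mset X) \<in> ?Q \<and> (\<exists>t2\<in>set lt. mset X = mset (fst t2) \<and>
      fst (snd t) = fst (snd t2) \<and> (mset (snd (snd t)), mset (snd (snd t2))) \<in> ?Q))"
    by (simp add: fun_eq_iff final_visible_def addcl_check_iff)
  then have visible: "(\<exists>\<sigma> t2. t2 \<in> ?T \<and> tau_seq 0 (set ls) ?T \<sigma> \<and> preseq \<sigma> = mset p \<and> postseq \<sigma> = pre t2 \<and>
       lab (trans_of t) = lab t2 \<and> Psi (pre (trans_of t)) \<sigma> ?Q \<and> (pre (trans_of t), postseq \<sigma>) \<in> ?Q \<and>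
       (post (trans_of t), post t2) \<in> ?Q)
     \<longleftrightarrow> exists_answer Rl ls lt t p (final_visible Rl lt t)"
    using exists_answer_iff[OF h ne, of t Rl "\<lambda>X. (mset (fst t), X) \<in> ?Q \<and> (\<exists>t2\<in>set lt. X = mset (fst t2) \<and>
      fst (snd t) = fst (snd t2) \<and> (mset (snd (snd t)), mset (snd (snd t2))) \<in> ?Q)"]
    by auto
  have "tau_seq_trans 0 (trans_of t) \<longleftrightarrow> is_tau_triple t" by (simp add: tau_seq_trans_def is_tau_triple_def)
  then show ?thesis unfolding answers_pre_iff tau visible by simp
qed

lemma all_addcl_iff_lists:
  assumes "rel_of_codes Rl \<subseteq> set ls \<times> set ls"
  shows "(\<forall>p2. (mset a, p2) \<in> addcl (rel_of_codes Rl) \<longrightarrow> P p2) \<longleftrightarrow>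
         (\<forall>p2l\<in>set (List.n_lists (length a) ls). addcl_check Rl a p2l \<longrightarrow> P (mset p2l))"
proof
  assume H: "\<forall>p2. (mset a, p2) \<in> addcl (rel_of_codes Rl) \<longrightarrow> P p2"
  show "\<forall>p2l\<in>set (List.n_lists (length a) ls). addcl_check Rl a p2l \<longrightarrow> P (mset p2l)"
    using H addcl_check_iff by blast
next
  assume H: "\<forall>p2l\<in>set (List.n_lists (length a) ls). addcl_check Rl a p2l \<longrightarrow> P (mset p2l)"
  show "\<forall>p2. (mset a, p2) \<in> addcl (rel_of_codes Rl) \<longrightarrow> P p2"
  proof (intro allI impI)
    fix p2 assume p: "(mset a, p2) \<in> addcl (rel_of_codes Rl)"
    obtain p2l where m: "mset p2l = p2" using ex_mset by blast
    have "length p2l = size p2" using m by (metis size_mset)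
    then have "length p2l = length a" using addcl_size[OF p] by simp
    moreover have "set p2l \<subseteq> set ls" using addcl_set_mset[OF p assms] m by (metis set_mset_mset)
    moreover have "addcl_check Rl a p2l" using p m addcl_check_iff by blast
    ultimately show "P p2" using H m unfolding set_n_lists by blast
  qed
qed

lemma simulation_half_iff_check:
  assumes h: "\<forall>t\<in>trans_of ` set lt. set_mset (pre t) \<subseteq> set ls" and r: "rel_of_codes Rl \<subseteq> set ls \<times> set ls"
    and ne: "\<forall>t\<in>set lt. fst t \<noteq> []"
  shows "simulation_half 0 (set ls) (trans_of ` set lt) (rel_of_codes Rl) \<longleftrightarrow> check_half Rl ls lt"
proof -
  have "simulation_half 0 (set ls) (trans_of ` set lt) (rel_of_codes Rl) \<longleftrightarrow>
     (\<forall>t\<in>set lt. \<forall>p2. (pre (trans_of t), p2) \<in> addcl (rel_of_codes Rl) \<longrightarrow> answers 0 (set ls) (trans_of ` set lt) (rel_of_codes Rl) (pre (trans_of t)) p2 (trans_of t))"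
    unfolding simulation_half_iff_pre by simp
  also have "\<dots> \<longleftrightarrow> (\<forall>t\<in>set lt. \<forall>p2l\<in>set (List.n_lists (length (fst t)) ls). addcl_check Rl (fst t) p2l \<longrightarrow>
     answers 0 (set ls) (trans_of ` set lt) (rel_of_codes Rl) (pre (trans_of t)) (mset p2l) (trans_of t))"
    using all_addcl_iff_lists[OF r] by simp
  also have "\<dots> \<longleftrightarrow> check_half Rl ls lt"
    unfolding check_half_def
  proof (intro ball_cong refl imp_cong)
    fix t p2l assume t: "t \<in> set lt" and p: "p2l \<in> set (List.n_lists (length (fst t)) ls)"
    have "p2l \<noteq> []" using ne t p unfolding set_n_lists by auto
    then show "answers 0 (set ls) (trans_of ` set lt) (rel_of_codes Rl) (pre (trans_of t)) (mset p2l) (trans_of t) \<longleftrightarrow>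
     (is_tau_triple t \<and> exists_answer Rl ls lt t p2l (final_tau Rl t)) \<or> exists_answer Rl ls lt t p2l (final_visible Rl lt t)"
      by (rule answers_iff_exists_answer[OF h])
  qed
  finally show ?thesis .
qed

theorem branching_place_bisim_iff_check:
  assumes net: "pt_net 0 (set ls) (set la) (trans_of ` set lt)" and R: "set lr \<subseteq> set ls \<times> set ls"
  shows "branching_place_bisim 0 (set ls) (set la) (trans_of ` set lt) (set lr) \<longleftrightarrow>
     check_half (map prod_encode lr) ls lt \<and> check_half (map (\<lambda>q. npair (snd q) (fst q)) lr) ls lt"
proof -
  have h: "\<forall>t\<in>trans_of ` set lt. set_mset (pre t) \<subseteq> set ls" using net unfolding pt_net_def by blast
  have ne: "\<forall>t\<in>set lt. fst t \<noteq> []" using net unfolding pt_net_def by auto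
  have r1: "rel_of_codes (map prod_encode lr) = set lr" unfolding rel_of_codes_def by force
  have r2: "rel_of_codes (map (\<lambda>q. npair (snd q) (fst q)) lr) = (set lr)\<inverse>" unfolding rel_of_codes_def by force
  have R2: "(set lr)\<inverse> \<subseteq> set ls \<times> set ls" using R by auto
  show ?thesis
    unfolding branching_place_bisim_iff_halves
    using simulation_half_iff_check[OF h, of "map prod_encode lr"] simulation_half_iff_check[OF h, of "map (\<lambda>q. npair (snd q) (fst q)) lr"]
      r1 r2 R R2 ne by simp
qed


section \<open>The check is computable\<close>

lemma decidable_addcl_check [computable_intros]: assumes RL: "computable1 RL" and X: "computable1 X"
    and Y: "computable1 Y"
  shows "decidable (\<lambda>z. addcl_check (list_decode (RL z)) (list_decode (X z)) (list_decode (Y z)))"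
proof -
  have "decidable (\<lambda>z. \<exists>q\<in>set (list_decode (list_encode (map list_encode (List.n_lists (length (list_decode (X z))) (list_decode (RL z)))))).
      mset (list_decode (list_encode (map (\<lambda>y. nfst y) (list_decode q)))) = mset (list_decode (X z)) \<and>
      mset (list_decode (list_encode (map (\<lambda>y. nsnd y) (list_decode q)))) = mset (list_decode (Y z)))"
    by (intro computable_intros computable1_compose1[OF X] computable1_compose1[OF Y] computable1_compose1[OF RL] X Y RL)
  then show ?thesis by (rule decidable_cong) (auto simp: addcl_check_def)
qed

lemma pre_edges_foldr: "pre_edges cs = foldr (\<lambda>y acc. nfst y # remove1 (nsnd y) acc) cs []"
  by (induction cs) auto

lemma pre_edges_foldl: "pre_edges cs = foldl (\<lambda>acc y. nfst y # remove1 (nsnd y) acc) [] (rev cs)"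
  unfolding pre_edges_foldr foldr_conv_foldl ..

lemma computable1_pre_edges [computable_intros]: assumes L: "computable1 L"
  shows "computable1 (\<lambda>z. list_encode (pre_edges (list_decode (L z))))"
proof -
  have c: "computable1 (\<lambda>z. foldl (\<lambda>acc y. list_encode (nfst y # list_decode (list_encode (remove1 (nsnd y) (list_decode acc))))) (list_encode []) (list_decode (list_encode (rev (list_decode (L z))))))"
    by (intro computable_intros L)
  show ?thesis
    by (rule computable1_cong[OF c]) (simp only: list_encode_inverse foldl_list_encode[where g="\<lambda>y acc. nfst y # remove1 (nsnd y) acc"] pre_edges_foldl)
qed

lemma step_edges_fun: "step_edges = (\<lambda>ml c. nsnd c # remove1 (nfst c) ml)" by (intro ext) (simp add: step_edges_def)

lemma computable1_reach_edges [computable_intros]: assumes M: "computable1 M" and L: "computable1 L"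
  shows "computable1 (\<lambda>z. list_encode (reach_edges (list_decode (M z)) (list_decode (L z))))"
proof -
  have c: "computable1 (\<lambda>z. foldl (\<lambda>acc y. list_encode (nsnd y # list_decode (list_encode (remove1 (nfst y) (list_decode acc))))) (M z) (list_decode (L z)))"
    by (intro computable_intros L M)
  show ?thesis
    by (rule computable1_cong[OF c]) (simp only: list_encode_inverse foldl_list_encode[where g="\<lambda>y acc. nsnd y # remove1 (nfst y) acc"] reach_edges_def step_edges_fun)
qed

definition befores_edges_step :: "nat \<Rightarrow> nat \<Rightarrow> nat" where
  "befores_edges_step s c = npair (list_encode (nsnd c # list_decode (list_encode (remove1 (nfst c) (list_decode (nfst s)))))) (list_encode (nfst s # list_decode (nsnd s)))"

lemma foldl_befores_edges_step: "foldl befores_edges_step (npair mc Lc) cs = npair (list_encode (reach_edges (list_decode mc) cs)) (list_encode (rev (map list_encode (befores_edges (list_decode mc) cs)) @ list_decode Lc))"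
proof (induction cs arbitrary: mc Lc)
  case Nil then show ?case by (simp add: reach_edges_def)
next
  case (Cons c cs)
  have "foldl befores_edges_step (npair mc Lc) (c # cs) = foldl befores_edges_step (npair (list_encode (step_edges (list_decode mc) c)) (list_encode (mc # list_decode Lc))) cs"
    by (simp add: befores_edges_step_def step_edges_def)
  also have "\<dots> = npair (list_encode (reach_edges (list_decode mc) (c # cs))) (list_encode (rev (map list_encode (befores_edges (list_decode mc) (c # cs))) @ list_decode Lc))"
    unfolding Cons.IH by (simp add: reach_edges_def)
  finally show ?case .
qed

lemma computable1_befores_edges [computable_intros]: assumes M: "computable1 M" and L: "computable1 L"
  shows "computable1 (\<lambda>z. list_encode (map list_encode (befores_edges (list_decode (M z)) (list_decode (L z)))))"
proof -
  have c: "computable1 (\<lambda>z. list_encode (rev (list_decode (nsnd (foldl (\<lambda>acc y. befores_edges_step acc y) (npair (M z) (list_encode [])) (list_decode (L z)))))))"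
    unfolding befores_edges_step_def by (intro computable_intros L M)
  show ?thesis
    by (rule computable1_cong[OF c]) (simp add: foldl_befores_edges_step)
qed

lemma decidable_edge_decomp [computable_intros]: assumes P: "computable1 P" and CS: "computable1 CS"
  shows "decidable (\<lambda>z. edge_decomp (list_decode (P z)) (map list_decode (list_decode (CS z))))"
proof -
  have c: "decidable (\<lambda>z. (\<forall>c\<in>set (list_decode (CS z)). linked (list_decode c)) \<and>
     mset (list_decode (list_encode (pre_edges (list_decode (list_encode (concat (map list_decode (list_decode (CS z))))))))) =
       mset (list_decode (list_encode (map (\<lambda>c. nfst (hd (list_decode c))) (list_decode (CS z))))) \<and>
     mset (list_decode (list_encode (map (\<lambda>c. nfst (hd (list_decode c))) (list_decode (CS z))))) = mset (list_decode (P z)) \<and>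
     mset (list_decode (list_encode (reach_edges (list_decode (P z)) (list_decode (list_encode (concat (map list_decode (list_decode (CS z))))))))) =
       mset (list_decode (list_encode (map (\<lambda>c. nsnd (hd (list_decode (list_encode (rev (list_decode c)))))) (list_decode (CS z))))))"
    by (intro computable_intros P CS)
  show ?thesis by (rule decidable_cong[OF c]) (simp add: edge_decomp_def o_def)
qed


definition trans_pre_code :: "nat \<Rightarrow> nat" where "trans_pre_code c = hd (list_decode c)"
definition trans_lab_code :: "nat \<Rightarrow> nat" where "trans_lab_code c = hd (list_decode (list_encode (tl (list_decode c))))"
definition trans_post_code :: "nat \<Rightarrow> nat" where "trans_post_code c = hd (list_decode (list_encode (tl (list_decode (list_encode (tl (list_decode c)))))))"
definition decode_trans :: "nat \<Rightarrow> nat list \<times> nat \<times> nat list" where "decode_trans c = (list_decode (trans_pre_code c), trans_lab_code c, list_decode (trans_post_code c))"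

lemma decode_enc_trans: "decode_trans (enc_trans t) = t"
  by (cases t) (simp add: decode_trans_def trans_pre_code_def trans_lab_code_def trans_post_code_def enc_trans_def)

lemma computable1_trans_pre_code [computable_intros]: "computable1 C \<Longrightarrow> computable1 (\<lambda>z. trans_pre_code (C z))"
  unfolding trans_pre_code_def by (intro computable_intros)
lemma computable1_trans_lab_code [computable_intros]: "computable1 C \<Longrightarrow> computable1 (\<lambda>z. trans_lab_code (C z))"
  unfolding trans_lab_code_def by (intro computable_intros)
lemma computable1_trans_post_code [computable_intros]: "computable1 C \<Longrightarrow> computable1 (\<lambda>z. trans_post_code (C z))"
  unfolding trans_post_code_def by (intro computable_intros)


lemma tau_edges_decode_trans: "tau_edges ls (map decode_trans cs) = map (\<lambda>c. npair (hd (list_decode (trans_pre_code c))) (hd (list_decode (trans_post_code c))))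
    (filter (\<lambda>c. trans_lab_code c = 0 \<and> length (list_decode (trans_pre_code c)) = 1 \<and> length (list_decode (trans_post_code c)) = 1) cs) @ map (\<lambda>s. npair s s) ls"
  by (simp add: tau_edges_def filter_map o_def is_tau_triple_def decode_trans_def)

lemma computable1_tau_edges [computable_intros]: assumes LS: "computable1 LS" and LT: "computable1 LT"
  shows "computable1 (\<lambda>z. list_encode (tau_edges (list_decode (LS z)) (map decode_trans (list_decode (LT z)))))"
proof -
  have c: "computable1 (\<lambda>z. list_encode (list_decode (list_encode (map (\<lambda>c. npair (hd (list_decode (trans_pre_code c))) (hd (list_decode (trans_post_code c))))
    (list_decode (list_encode (filter (\<lambda>c. trans_lab_code c = 0 \<and> length (list_decode (trans_pre_code c)) = 1 \<and> length (list_decode (trans_post_code c)) = 1) (list_decode (LT z))))))) @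
     list_decode (list_encode (map (\<lambda>s. npair s s) (list_decode (LS z))))))"
    by (intro computable_intros LS LT)
  show ?thesis by (rule computable1_cong[OF c]) (simp only: tau_edges_decode_trans list_encode_inverse)
qed

lemma computable1_short_edge_lists [computable_intros]: assumes LS: "computable1 LS" and LT: "computable1 LT"
  shows "computable1 (\<lambda>z. list_encode (map list_encode (short_edge_lists (list_decode (LS z)) (map decode_trans (list_decode (LT z))))))"
proof -
  have c: "computable1 (\<lambda>z. list_encode (concat (map list_decode (list_decode (list_encode (map (\<lambda>j. list_encode (map list_encode (List.n_lists (Suc j)
        (list_decode (list_encode (tau_edges (list_decode (LS z)) (map decode_trans (list_decode (LT z))))))))) (list_decode (list_encode [0..<length (list_decode (LS z))]))))))))"
    by (intro computable_intros LS LT computable1_compose1[OF LS] computable1_compose1[OF LT])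
  show ?thesis by (rule computable1_cong[OF c]) (simp add: short_edge_lists_def map_concat o_def)
qed

lemma decidable_exists_answer_tau [computable_intros]: assumes RL: "computable1 RL" and LS: "computable1 LS"
    and LT: "computable1 LT" and Tc: "computable1 Tc" and P: "computable1 P"
  shows "decidable (\<lambda>z. exists_answer (list_decode (RL z)) (list_decode (LS z)) (map decode_trans (list_decode (LT z))) (decode_trans (Tc z)) (list_decode (P z)) (final_tau (list_decode (RL z)) (decode_trans (Tc z))))"
proof -
  have c: "decidable (\<lambda>z. \<exists>c\<in>set (list_decode (list_encode (map list_encode (List.n_lists (length (list_decode (P z))) (list_decode (list_encode (map list_encode (short_edge_lists (list_decode (LS z)) (map decode_trans (list_decode (LT z))))))))))).
   edge_decomp (list_decode (P z)) (map list_decode (list_decode c)) \<and>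
   (\<forall>m\<in>set (list_decode (list_encode (map list_encode (befores_edges (list_decode (P z)) (list_decode (list_encode (concat (map list_decode (list_decode c))))))))). addcl_check (list_decode (RL z)) (list_decode (trans_pre_code (Tc z))) (list_decode m)) \<and>
   (addcl_check (list_decode (RL z)) (list_decode (trans_pre_code (Tc z))) (list_decode (list_encode (reach_edges (list_decode (P z)) (list_decode (list_encode (concat (map list_decode (list_decode c)))))))) \<and>
    addcl_check (list_decode (RL z)) (list_decode (trans_post_code (Tc z))) (list_decode (list_encode (reach_edges (list_decode (P z)) (list_decode (list_encode (concat (map list_decode (list_decode c))))))))))"
    by (intro computable_intros RL LS LT Tc P computable1_compose1[OF RL] computable1_compose1[OF LS] computable1_compose1[OF LT] computable1_compose1[OF Tc] computable1_compose1[OF P])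
  show ?thesis by (rule decidable_cong[OF c]) (simp add: exists_answer_def final_tau_def decode_trans_def n_lists_map o_def)
qed

lemma decidable_exists_answer_visible [computable_intros]: assumes RL: "computable1 RL" and LS: "computable1 LS"
    and LT: "computable1 LT" and Tc: "computable1 Tc" and P: "computable1 P"
  shows "decidable (\<lambda>z. exists_answer (list_decode (RL z)) (list_decode (LS z)) (map decode_trans (list_decode (LT z))) (decode_trans (Tc z)) (list_decode (P z)) (final_visible (list_decode (RL z)) (map decode_trans (list_decode (LT z))) (decode_trans (Tc z))))"
proof -
  have c: "decidable (\<lambda>z. \<exists>c\<in>set (list_decode (list_encode (map list_encode (List.n_lists (length (list_decode (P z))) (list_decode (list_encode (map list_encode (short_edge_lists (list_decode (LS z)) (map decode_trans (list_decode (LT z))))))))))).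
   edge_decomp (list_decode (P z)) (map list_decode (list_decode c)) \<and>
   (\<forall>m\<in>set (list_decode (list_encode (map list_encode (befores_edges (list_decode (P z)) (list_decode (list_encode (concat (map list_decode (list_decode c))))))))). addcl_check (list_decode (RL z)) (list_decode (trans_pre_code (Tc z))) (list_decode m)) \<and>
   (addcl_check (list_decode (RL z)) (list_decode (trans_pre_code (Tc z))) (list_decode (list_encode (reach_edges (list_decode (P z)) (list_decode (list_encode (concat (map list_decode (list_decode c)))))))) \<and>
    (\<exists>c2\<in>set (list_decode (LT z)). mset (list_decode (list_encode (reach_edges (list_decode (P z)) (list_decode (list_encode (concat (map list_decode (list_decode c)))))))) = mset (list_decode (trans_pre_code c2)) \<and>
        trans_lab_code (Tc z) = trans_lab_code c2 \<and> addcl_check (list_decode (RL z)) (list_decode (trans_post_code (Tc z))) (list_decode (trans_post_code c2)))))"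
    by (intro computable_intros RL LS LT Tc P computable1_compose1[OF RL] computable1_compose1[OF LS] computable1_compose1[OF LT] computable1_compose1[OF Tc] computable1_compose1[OF P])
  show ?thesis by (rule decidable_cong[OF c]) (simp add: exists_answer_def final_visible_def decode_trans_def n_lists_map o_def)
qed

lemma decidable_check_half [computable_intros]: assumes RL: "computable1 RL" and LS: "computable1 LS"
    and LT: "computable1 LT"
  shows "decidable (\<lambda>z. check_half (list_decode (RL z)) (list_decode (LS z)) (map decode_trans (list_decode (LT z))))"
proof -
  have c: "decidable (\<lambda>z. \<forall>c\<in>set (list_decode (LT z)). \<forall>p\<in>set (list_decode (list_encode (map list_encode (List.n_lists (length (list_decode (trans_pre_code c))) (list_decode (LS z)))))).
     addcl_check (list_decode (RL z)) (list_decode (trans_pre_code c)) (list_decode p) \<longrightarrow>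
     ((trans_lab_code c = 0 \<and> length (list_decode (trans_pre_code c)) = 1 \<and> length (list_decode (trans_post_code c)) = 1) \<and>
        exists_answer (list_decode (RL z)) (list_decode (LS z)) (map decode_trans (list_decode (LT z))) (decode_trans c) (list_decode p) (final_tau (list_decode (RL z)) (decode_trans c))) \<or>
     exists_answer (list_decode (RL z)) (list_decode (LS z)) (map decode_trans (list_decode (LT z))) (decode_trans c) (list_decode p) (final_visible (list_decode (RL z)) (map decode_trans (list_decode (LT z))) (decode_trans c)))"
    by (intro computable_intros RL LS LT computable1_compose1[OF RL] computable1_compose1[OF LS] computable1_compose1[OF LT])
  show ?thesis
  proof (rule decidable_cong[OF c])
    fix z
    show "(\<forall>c\<in>set (list_decode (LT z)). \<forall>p\<in>set (list_decode (list_encode (map list_encode (List.n_lists (length (list_decode (trans_pre_code c))) (list_decode (LS z)))))).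
     addcl_check (list_decode (RL z)) (list_decode (trans_pre_code c)) (list_decode p) \<longrightarrow>
     ((trans_lab_code c = 0 \<and> length (list_decode (trans_pre_code c)) = 1 \<and> length (list_decode (trans_post_code c)) = 1) \<and>
        exists_answer (list_decode (RL z)) (list_decode (LS z)) (map decode_trans (list_decode (LT z))) (decode_trans c) (list_decode p) (final_tau (list_decode (RL z)) (decode_trans c))) \<or>
     exists_answer (list_decode (RL z)) (list_decode (LS z)) (map decode_trans (list_decode (LT z))) (decode_trans c) (list_decode p) (final_visible (list_decode (RL z)) (map decode_trans (list_decode (LT z))) (decode_trans c)))
      = check_half (list_decode (RL z)) (list_decode (LS z)) (map decode_trans (list_decode (LT z)))"
      by (simp add: check_half_def is_tau_triple_def decode_trans_def o_def)
  qed
qed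


text \<open>The components of the input are extracted with \<open>hd\<close> and \<open>tl\<close> only, so that their
  computability follows from the list combinators.\<close>

definition input_places :: "nat \<Rightarrow> nat" where "input_places z = hd (list_decode z)"
definition input_trans :: "nat \<Rightarrow> nat" where "input_trans z = hd (list_decode (list_encode (tl (list_decode (list_encode (tl (list_decode z)))))))"
definition input_rel :: "nat \<Rightarrow> nat" where "input_rel z = hd (list_decode (list_encode (tl (list_decode (list_encode (tl (list_decode (list_encode (tl (list_decode z))))))))))"
definition input_rel_converse :: "nat \<Rightarrow> nat" where "input_rel_converse z = list_encode (map (\<lambda>q. npair (nsnd q) (nfst q)) (list_decode (input_rel z)))"

definition bisim_decider :: "nat \<Rightarrow> nat" where
  "bisim_decider z = (if check_half (list_decode (input_rel z)) (list_decode (input_places z)) (map decode_trans (list_decode (input_trans z))) \<and>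
               check_half (list_decode (input_rel_converse z)) (list_decode (input_places z)) (map decode_trans (list_decode (input_trans z))) then 1 else 0)"

lemma computable1_input_places [computable_intros]: "computable1 input_places" unfolding input_places_def
  by (intro computable_intros)
lemma computable1_input_trans [computable_intros]: "computable1 input_trans" unfolding input_trans_def
  by (intro computable_intros)
lemma computable1_input_rel [computable_intros]: "computable1 input_rel" unfolding input_rel_def
  by (intro computable_intros)
lemma computable1_input_rel_converse [computable_intros]: "computable1 input_rel_converse"
  unfolding input_rel_converse_def by (intro computable_intros computable1_compose1[OF computable1_input_rel])

lemma computable1_bisim_decider [computable_intros]: "computable1 bisim_decider"
proof -
  have "decidable (\<lambda>z. check_half (list_decode (input_rel z)) (list_decode (input_places z)) (map decode_trans (list_decode (input_trans z))) \<and>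
               check_half (list_decode (input_rel_converse z)) (list_decode (input_places z)) (map decode_trans (list_decode (input_trans z))))"
    by (intro computable_intros computable1_input_places computable1_input_trans computable1_input_rel computable1_input_rel_converse)
  then show ?thesis unfolding decidable_def bisim_decider_def .
qed

lemma bisim_decider_correct:
  assumes net: "pt_net 0 (set ls) (set la) (trans_of ` set lt)" and R: "set lr \<subseteq> set ls \<times> set ls"
  shows "bisim_decider (enc_input ls la lt lr) = (if branching_place_bisim 0 (set ls) (set la) (trans_of ` set lt) (set lr) then 1 else 0)"
proof -
  let ?n = "enc_input ls la lt lr"
  have d: "list_decode ?n = [list_encode ls, list_encode la, list_encode (map enc_trans lt), list_encode (map prod_encode lr)]"
    by (simp add: enc_input_def)
  have 1: "list_decode (input_places ?n) = ls" unfolding input_places_def d by simp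
  have 2: "map decode_trans (list_decode (input_trans ?n)) = lt" unfolding input_trans_def d
    by (simp add: o_def decode_enc_trans)
  have 3: "list_decode (input_rel ?n) = map prod_encode lr" unfolding input_rel_def d by simp
  have 4: "list_decode (input_rel_converse ?n) = map (\<lambda>q. npair (snd q) (fst q)) lr"
    unfolding input_rel_converse_def 3 by (simp add: o_def)
  show ?thesis unfolding bisim_decider_def 1 2 3 4 branching_place_bisim_iff_check[OF net R] ..
qed

theorem mainTheorem9:
  shows "\<exists>f :: recf. \<forall>(ls :: nat list) (la :: nat list) lt (lr :: (nat \<times> nat) list)
      (S :: nat set) (A :: nat set) (T :: (nat, nat) trans set) (R :: (nat \<times> nat) set).
      set ls = S \<and> set la = A \<and> T = trans_of ` set lt \<and> set lr = R \<and>
      pt_net 0 S A T \<and> R \<subseteq> S \<times> S \<longrightarrow>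
      eval f [enc_input ls la lt lr] (if branching_place_bisim 0 S A T R then 1 else 0)"
proof -
  obtain r where r: "\<And>x. eval r [x] (bisim_decider x)"
    using computable1_recf[OF computable1_bisim_decider] by blast
  show ?thesis
  proof (intro exI[of _ r] allI impI)
    fix ls la lt lr S A T R
    assume "set ls = S \<and> set la = A \<and> T = trans_of ` set lt \<and> set lr = R \<and> pt_net 0 S A T \<and> R \<subseteq> S \<times> S"
    then show "eval r [enc_input ls la lt lr] (if branching_place_bisim 0 S A T R then 1 else 0)"
      using r[of "enc_input ls la lt lr"] bisim_decider_correct[of ls la lt lr] by auto
  qed
qed

end
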